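(* Let $(\mathcal{Y},\Theta,k)$ be one of: $\mathcal{Y}=\Theta=\mathbb{R}$ with the Gaussian kernel; $\mathcal{Y}=\Theta=\mathbb{R}_+$ with the Gamma kernel; $\mathcal{Y}=\Theta=[0,1]$ with the Beta kernel. The mixture map $T_k:D_k\to\mathcal{D}(\mathcal{Y})$, $T_kG(y)=\int_{\Theta\times\mathbb{R}_+}k(y\mid\theta,\phi)\,dG(\theta,\phi)$, is measurable, where $D_k$ carries the Borel $\sigma$-algebra of the weak topology and $\mathcal{D}(\mathcal{Y})$ the Borel $\sigma$-algebra of the Hellinger distance.
   Context: Kernels: Gaussian $k(y\mid\theta,\phi)=(2\pi\phi)^{-1/2}e^{-(y-\theta)^2/(2\phi)}$; Gamma $k(y\mid\theta,\phi)=\frac{(\phi/\theta)^\phi}{\Gamma(\phi)}y^{\phi-1}e^{-\phi y/\theta}$; Beta $k(y\mid\theta,\phi)=\frac{\Gamma(\phi)}{\Gamma(\theta\phi)\Gamma((1-\theta)\phi)}y^{\theta\phi-1}(1-y)^{(1-\theta)\phi-1}$. $\Gamma=\Theta\times\mathbb{R}_+$ with $\mathbb{R}_+=[0,\infty)$. $\Gamma_k^0=\Theta\times\{0\}$ for the Gaussian and Gamma kernels and $\Gamma_k^0=\Theta\times\{0\}\cup\{0,1\}\times\mathbb{R}_+$ for the Beta kernel. $D_k=\{G\in\mathcal{P}(\Gamma):G(\Gamma_k^0)=0\}$, a subset of the Borel probability measures on $\Gamma$ with the subspace weak topology. $\mathcal{D}(\mathcal{Y})$ is the set of probability densities on $\mathcal{Y}$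 w.r.t. Lebesgue measure with Hellinger distance $\mathcal{H}_d(f_1,f_2)=(\frac12\int(\sqrt{f_1}-\sqrt{f_2})^2)^{1/2}$. *)

theory Defs
  imports "HOL-Probability.Probability"
begin

definition gauss_kernel :: "real \<Rightarrow> real \<times> real \<Rightarrow> real" where
  "gauss_kernel y p = (case p of (\<theta>, \<phi>) \<Rightarrow>
     (2 * pi * \<phi>) powr (-1/2) * exp (- ((y - \<theta>)^2) / (2 * \<phi>)))"

definition gamma_kernel :: "real \<Rightarrow> real \<times> real \<Rightarrow> real" where
  "gamma_kernel y p = (case p of (\<theta>, \<phi>) \<Rightarrow>
     (\<phi> / \<theta>) powr \<phi> / Gamma \<phi> * y powr (\<phi> - 1) * exp (- \<phi> * y / \<theta>))"

definition beta_kernel :: "real \<Rightarrow> real \<times> real \<Rightarrow> real" where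
  "beta_kernel y p = (case p of (\<theta>, \<phi>) \<Rightarrow>
     Gamma \<phi> / (Gamma (\<theta> * \<phi>) * Gamma ((1 - \<theta>) * \<phi>))
       * y powr (\<theta> * \<phi> - 1) * (1 - y) powr ((1 - \<theta>) * \<phi> - 1))"

definition param_space :: "real set \<Rightarrow> (real \<times> real) set" where
  "param_space \<Theta> = \<Theta> \<times> {0..}"

definition prob_measures :: "(real \<times> real) set \<Rightarrow> (real \<times> real) measure set" where
  "prob_measures \<Gamma> = {G. sets G = sets (restrict_space borel \<Gamma>) \<and> prob_space G}"

definition weak_conv_topology :: "(real \<times> real) set \<Rightarrow> (real \<times> real) measure topology" where
  "weak_conv_topology \<Gamma> = topology_generated_by
     {{G \<in> prob_measures \<Gamma>. (\<integral>x. f x \<partial>G) \<in> U} | f U.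
        continuous_on \<Gamma> (f :: real \<times> real \<Rightarrow> real) \<and> bounded (f ` \<Gamma>) \<and> open U}"

definition Dk :: "(real \<times> real) set \<Rightarrow> (real \<times> real) set \<Rightarrow> (real \<times> real) measure set" where
  "Dk \<Gamma> \<Gamma>0 = {G \<in> prob_measures \<Gamma>. emeasure G \<Gamma>0 = 0}"

definition borel_of :: "'a topology \<Rightarrow> 'a measure" where
  "borel_of T = sigma (topspace T) {U. openin T U}"

definition densities :: "real set \<Rightarrow> (real \<Rightarrow> real) set" where
  "densities Y = {f. f \<in> borel_measurable (restrict_space lborel Y) \<and> (\<forall>y\<in>Y. 0 \<le> f y)
      \<and> set_integrable lborel Y f \<and> (\<integral>y\<in>Y. f y \<partial>lborel) = 1}"

definition hellinger :: "real set \<Rightarrow> (real \<Rightarrow> real) \<Rightarrow> (real \<Rightarrow> real) \<Rightarrow> real" where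
  "hellinger Y f g = sqrt ((1/2) * (\<integral>y\<in>Y. (sqrt (f y) - sqrt (g y))^2 \<partial>lborel))"

definition hellinger_topology :: "real set \<Rightarrow> (real \<Rightarrow> real) topology" where
  "hellinger_topology Y = topology_generated_by
     {{g \<in> densities Y. hellinger Y f g < r} | f r. f \<in> densities Y \<and> r > 0}"

definition mixture :: "(real \<Rightarrow> real \<times> real \<Rightarrow> real) \<Rightarrow> (real \<times> real) measure \<Rightarrow> real \<Rightarrow> real" where
  "mixture k G = (\<lambda>y. \<integral>p. k y p \<partial>G)"

end

theory Submission
  imports Defs
begin

text \<open>
  The mixture map is in fact continuous, which gives measurability. On the open set of
  nondegenerate parameters the kernel p \<mapsto> k(.|p) is continuous into L1 by Scheffe's lemma,
  because every k(.|p) is a probability density depending pointwise continuously on p. Given G0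
  in D_k and e > 0, cover the nondegenerate parameters by countably many balls on whose doubles
  the kernel moves by at most e in L1, and turn finitely many of them into continuous functions
  psi_1, ..., psi_n with sum at most 1, each supported in one doubled ball, such that the integral
  of their sum against G0 is at least 1 - e. For every G in D_k the mixture T_k G is then within
  1 - sum_i int psi_i dG + e in L1 of the finite mixture sum_i (int psi_i dG) k(.|q_i); since the
  weights int psi_i dG are weakly continuous in G, T_k G stays L1-close to T_k G0 on a weak
  neighbourhood of G0. Finally, Hellinger balls are open for the L1 distance.
\<close>

lemma continuous_map_measurable_borel_of:
  assumes "continuous_map X Y f"
  shows "f \<in> measurable (borel_of X) (borel_of Y)"
  unfolding borel_of_def
proof (rule measurable_measure_of)
  show "{U. openin Y U} \<subseteq> Pow (topspace Y)" by (auto dest: openin_subset)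
  have space: "space (sigma (topspace X) {U. openin X U}) = topspace X"
    by (rule space_measure_of) (auto dest: openin_subset)
  show "f \<in> space (sigma (topspace X) {U. openin X U}) \<rightarrow> topspace Y"
    using assms by (auto simp: space continuous_map_def)
  fix U assume "U \<in> {U. openin Y U}"
  then have "openin X (f -` U \<inter> topspace X)"
    using assms by (auto simp: continuous_map)
  then show "f -` U \<inter> space (sigma (topspace X) {U. openin X U}) \<in> sets (sigma (topspace X) {U. openin X U})"
    by (auto simp: space sets_measure_of_conv dest: openin_subset)
qed

lemma prob_measuresD:
  assumes "G \<in> prob_measures \<Gamma>"
  shows "prob_space G" "sets G = sets (restrict_space borel \<Gamma>)" "space G = \<Gamma>"
proof -
  show "prob_space G" "sets G = sets (restrict_space borel \<Gamma>)"
    using assms by (auto simp: prob_measures_def)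
  then show "space G = \<Gamma>"
    by (metis sets_eq_imp_space_eq space_borel space_restrict_space inf_top.right_neutral)
qed

lemma borel_measurable_prob_measure:
  assumes "G \<in> prob_measures \<Gamma>" and "f \<in> borel_measurable borel"
  shows "f \<in> borel_measurable G"
  using assms by (simp add: measurable_cong_sets[OF prob_measuresD(2)[OF assms(1)] refl]
      measurable_restrict_space1)

lemma topspace_weak_conv_topology: "topspace (weak_conv_topology \<Gamma>) = prob_measures \<Gamma>"
proof -
  have "prob_measures \<Gamma> = {G \<in> prob_measures \<Gamma>. (\<integral>x. (\<lambda>_. 0) x \<partial>G) \<in> UNIV}"
    by simp
  then have "prob_measures \<Gamma> \<in> {{G \<in> prob_measures \<Gamma>. (\<integral>x. f x \<partial>G) \<in> U} | f U.
        continuous_on \<Gamma> (f :: real \<times> real \<Rightarrow> real) \<and> bounded (f ` \<Gamma>) \<and> open U}"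
    by (intro CollectI exI[of _ "\<lambda>_. 0"] exI[of _ UNIV]) (auto simp: bounded_def)
  then show ?thesis
    unfolding weak_conv_topology_def topology_generated_by_topspace by auto
qed

lemma openin_weak_conv_topology_integral:
  fixes f :: "real \<times> real \<Rightarrow> real"
  assumes "continuous_on \<Gamma> f" "bounded (f ` \<Gamma>)" "open U"
  shows "openin (weak_conv_topology \<Gamma>) {G \<in> prob_measures \<Gamma>. (\<integral>x. f x \<partial>G) \<in> U}"
  unfolding weak_conv_topology_def
  by (rule topology_generated_by_Basis, subst mem_Collect_eq, intro exI[of _ f] exI[of _ U])
     (use assms in simp)

lemma openin_weak_conv_topology_integrals:
  fixes \<psi> :: "'i \<Rightarrow> real \<times> real \<Rightarrow> real"
  assumes "finite I"
    and "\<And>i. i \<in> I \<Longrightarrow> continuous_on \<Gamma> (\<psi> i) \<and> bounded (\<psi> i ` \<Gamma>) \<and> open (U i)"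
  shows "openin (weak_conv_topology \<Gamma>) {G \<in> prob_measures \<Gamma>. \<forall>i\<in>I. (\<integral>x. \<psi> i x \<partial>G) \<in> U i}"
  using assms
proof (induction I rule: finite_induct)
  case empty
  then show ?case
    using openin_topspace[of "weak_conv_topology \<Gamma>"] by (simp add: topspace_weak_conv_topology)
next
  case (insert j I)
  have split: "{G \<in> prob_measures \<Gamma>. \<forall>i\<in>insert j I. (\<integral>x. \<psi> i x \<partial>G) \<in> U i}
      = {G \<in> prob_measures \<Gamma>. (\<integral>x. \<psi> j x \<partial>G) \<in> U j}
        \<inter> {G \<in> prob_measures \<Gamma>. \<forall>i\<in>I. (\<integral>x. \<psi> i x \<partial>G) \<in> U i}"
    by blast
  have "openin (weak_conv_topology \<Gamma>) {G \<in> prob_measures \<Gamma>. (\<integral>x. \<psi> j x \<partial>G) \<in> U j}"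
    using insert.prems by (intro openin_weak_conv_topology_integral) auto
  moreover have "openin (weak_conv_topology \<Gamma>) {G \<in> prob_measures \<Gamma>. \<forall>i\<in>I. (\<integral>x. \<psi> i x \<partial>G) \<in> U i}"
    using insert.prems by (intro insert.IH) auto
  ultimately show ?case
    unfolding split by (rule openin_Int)
qed

lemma topspace_hellinger_topology: "topspace (hellinger_topology Y) = densities Y"
  unfolding hellinger_topology_def topology_generated_by_topspace
proof safe
  fix g assume "g \<in> densities Y"
  then show "g \<in> \<Union> {{g \<in> densities Y. hellinger Y f g < r} |f r. f \<in> densities Y \<and> 0 < r}"
    by (auto intro!: exI[of _ g] exI[of _ 1] simp: hellinger_def)
qed

lemma densities_iff:
  assumes "Y \<in> sets borel"
  shows "f \<in> densities Y \<longleftrightarrow> f \<in> borel_measurable (restrict_space lborel Y) \<and> (\<forall>y\<in>Y. 0 \<le> f y)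
           \<and> (\<integral>\<^sup>+y. ennreal (f y) \<partial>restrict_space lborel Y) = 1"
proof -
  let ?M = "restrict_space lborel Y"
  have Y: "Y \<inter> space lborel \<in> sets lborel" using assms by simp
  have set_integrable: "set_integrable lborel Y f \<longleftrightarrow> integrable ?M f"
    unfolding set_integrable_def by (rule integrable_restrict_space[OF Y, symmetric])
  have set_integral: "(\<integral>y\<in>Y. f y \<partial>lborel) = integral\<^sup>L ?M f"
    unfolding set_lebesgue_integral_def by (rule integral_restrict_space[OF Y, symmetric])
  have "integrable ?M f \<and> integral\<^sup>L ?M f = 1 \<longleftrightarrow> (\<integral>\<^sup>+y. ennreal (f y) \<partial>?M) = 1"
    if f: "f \<in> borel_measurable ?M" "\<forall>y\<in>Y. 0 \<le> f y"
  proof -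
    have nonneg: "AE y in ?M. 0 \<le> f y"
      using f(2) by (intro AE_I2) (simp add: space_restrict_space)
    show ?thesis
      using nn_integral_eq_integral[OF _ nonneg] integrableI_nonneg[OF f(1) nonneg] by auto
  qed
  then show ?thesis
    unfolding densities_def mem_Collect_eq set_integrable set_integral by blast
qed

lemma densitiesD:
  assumes "Y \<in> sets borel" and "f \<in> densities Y"
  shows "f \<in> borel_measurable (restrict_space lborel Y)" "\<And>y. y \<in> Y \<Longrightarrow> 0 \<le> f y"
    "integrable (restrict_space lborel Y) f" "(\<integral>y. f y \<partial>restrict_space lborel Y) = 1"
proof -
  have Y: "Y \<inter> space lborel \<in> sets lborel" using assms by simp
  show "f \<in> borel_measurable (restrict_space lborel Y)" "\<And>y. y \<in> Y \<Longrightarrow> 0 \<le> f y"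
    using assms by (auto simp: densities_def)
  show "integrable (restrict_space lborel Y) f"
    using assms unfolding densities_def set_integrable_def by (subst integrable_restrict_space[OF Y]) auto
  show "(\<integral>y. f y \<partial>restrict_space lborel Y) = 1"
    using assms unfolding densities_def set_lebesgue_integral_def by (subst integral_restrict_space[OF Y]) auto
qed

lemma densitiesI:
  assumes "f \<in> borel_measurable borel" and "\<And>y. y \<in> Y \<Longrightarrow> 0 \<le> f y"
    and "set_integrable lborel Y f" and "(\<integral>y\<in>Y. f y \<partial>lborel) = 1"
  shows "f \<in> densities Y"
  using assms unfolding densities_def by (auto intro: measurable_restrict_space1)

lemma square_diff_triangle_le:
  fixes a b c d :: real
  assumes "0 \<le> b" "0 \<le> c" "d > 0"
  shows "(a - b)\<^sup>2 \<le> (a - c)\<^sup>2 + d * a\<^sup>2 + (1 / d + 1) * \<bar>b\<^sup>2 - c\<^sup>2\<bar>"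
proof -
  have expand: "(a - b)\<^sup>2 = (a - c)\<^sup>2 + 2 * a * (c - b) + (b\<^sup>2 - c\<^sup>2)"
    by (simp add: power2_eq_square algebra_simps)
  have "0 \<le> (d * a - (c - b))\<^sup>2 / d"
    using \<open>d > 0\<close> by simp
  also have "\<dots> = d * a\<^sup>2 - 2 * a * (c - b) + (c - b)\<^sup>2 / d"
    using \<open>d > 0\<close> by (simp add: power2_eq_square field_simps)
  finally have am_gm: "2 * a * (c - b) \<le> d * a\<^sup>2 + (c - b)\<^sup>2 / d"
    by linarith
  have "(c - b)\<^sup>2 = \<bar>c - b\<bar> * \<bar>c - b\<bar>"
    by (simp add: power2_eq_square)
  also have "\<dots> \<le> \<bar>c - b\<bar> * (c + b)"
    using assms by (intro mult_left_mono) auto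
  also have "\<dots> = \<bar>(c - b) * (c + b)\<bar>"
    using assms by (simp add: abs_mult)
  also have "\<dots> = \<bar>b\<^sup>2 - c\<^sup>2\<bar>"
    by (simp add: power2_eq_square algebra_simps abs_minus_commute)
  finally have "(c - b)\<^sup>2 / d \<le> \<bar>b\<^sup>2 - c\<^sup>2\<bar> / d"
    using \<open>d > 0\<close> by (simp add: divide_right_mono)
  then show ?thesis
    using expand am_gm by (simp add: distrib_right)
qed

lemma hellinger_eq_sqrt_integral:
  assumes "Y \<in> sets borel"
  shows "hellinger Y f g = sqrt ((\<integral>y. (sqrt (f y) - sqrt (g y))\<^sup>2 \<partial>restrict_space lborel Y) / 2)"
  unfolding hellinger_def set_lebesgue_integral_def using assms by (simp add: integral_restrict_space)

lemma hellinger_less_iff: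
  assumes "Y \<in> sets borel" and "r > 0"
  shows "hellinger Y f g < r \<longleftrightarrow> (\<integral>y. (sqrt (f y) - sqrt (g y))\<^sup>2 \<partial>restrict_space lborel Y) < 2 * r\<^sup>2"
proof -
  have "hellinger Y f g < r
      \<longleftrightarrow> sqrt ((\<integral>y. (sqrt (f y) - sqrt (g y))\<^sup>2 \<partial>restrict_space lborel Y) / 2) < sqrt (r\<^sup>2)"
    using assms by (simp add: hellinger_eq_sqrt_integral)
  then show ?thesis
    unfolding real_sqrt_less_iff by linarith
qed

lemma integrable_hellinger_integrand:
  assumes Y: "Y \<in> sets borel" and "f \<in> densities Y" and "g \<in> densities Y"
  shows "integrable (restrict_space lborel Y) (\<lambda>y. (sqrt (f y) - sqrt (g y))\<^sup>2)"
proof (rule Bochner_Integration.integrable_bound)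
  note [measurable] = densitiesD(1)[OF Y assms(2)] densitiesD(1)[OF Y assms(3)]
  show "integrable (restrict_space lborel Y) (\<lambda>y. f y + g y)"
    using densitiesD(3)[OF Y] assms(2,3) by auto
  show "(\<lambda>y. (sqrt (f y) - sqrt (g y))\<^sup>2) \<in> borel_measurable (restrict_space lborel Y)"
    by measurable
  show "AE y in restrict_space lborel Y. norm ((sqrt (f y) - sqrt (g y))\<^sup>2) \<le> norm (f y + g y)"
  proof (rule AE_I2)
    fix y assume "y \<in> space (restrict_space lborel Y)"
    then have "0 \<le> f y" "0 \<le> g y"
      using densitiesD(2)[OF Y] assms(2,3) by (auto simp: space_restrict_space)
    then have "(sqrt (f y) - sqrt (g y))\<^sup>2 \<le> f y + g y"
      by (simp add: power2_diff)
    then show "norm ((sqrt (f y) - sqrt (g y))\<^sup>2) \<le> norm (f y + g y)"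
      by simp
  qed
qed

lemma hellinger_integral_le_L1:
  assumes Y: "Y \<in> sets borel" and f: "f \<in> densities Y" and g: "g \<in> densities Y"
    and g0: "g0 \<in> densities Y" and "d > 0"
  defines "M \<equiv> restrict_space lborel Y"
  shows "(\<integral>y. (sqrt (f y) - sqrt (g y))\<^sup>2 \<partial>M)
           \<le> (\<integral>y. (sqrt (f y) - sqrt (g0 y))\<^sup>2 \<partial>M) + d + (1 / d + 1) * (\<integral>y. \<bar>g y - g0 y\<bar> \<partial>M)"
proof -
  note dens = densitiesD[OF Y, folded M_def]
  note sq_integrable = integrable_hellinger_integrand[OF Y f, folded M_def]
  have diff_integrable: "integrable M (\<lambda>y. \<bar>g y - g0 y\<bar>)"
    using dens(3) g g0 by auto
  have "(\<integral>y. (sqrt (f y) - sqrt (g y))\<^sup>2 \<partial>M)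
      \<le> (\<integral>y. (sqrt (f y) - sqrt (g0 y))\<^sup>2 + d * f y + (1 / d + 1) * \<bar>g y - g0 y\<bar> \<partial>M)"
  proof (rule integral_mono)
    fix y assume "y \<in> space M"
    then have "0 \<le> f y" "0 \<le> g y" "0 \<le> g0 y"
      using dens(2) f g g0 by (auto simp: M_def space_restrict_space)
    then show "(sqrt (f y) - sqrt (g y))\<^sup>2 \<le> (sqrt (f y) - sqrt (g0 y))\<^sup>2 + d * f y + (1 / d + 1) * \<bar>g y - g0 y\<bar>"
      using square_diff_triangle_le[where a = "sqrt (f y)" and b = "sqrt (g y)" and c = "sqrt (g0 y)"]
        \<open>d > 0\<close> by simp
  qed (use sq_integrable[OF g] sq_integrable[OF g0] dens(3)[OF f] diff_integrable in auto)
  also have "\<dots> = (\<integral>y. (sqrt (f y) - sqrt (g0 y))\<^sup>2 \<partial>M) + d + (1 / d + 1) * (\<integral>y. \<bar>g y - g0 y\<bar> \<partial>M)"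
    using sq_integrable[OF g0] dens(3,4)[OF f] diff_integrable by simp
  finally show ?thesis .
qed

lemma hellinger_ball_contains_L1_ball:
  assumes Y: "Y \<in> sets borel" and f: "f \<in> densities Y" and g0: "g0 \<in> densities Y"
    and "hellinger Y f g0 < r"
  obtains \<eta> :: real where "\<eta> > 0"
    "\<And>g. g \<in> densities Y \<Longrightarrow> (\<integral>\<^sup>+y. ennreal \<bar>g y - g0 y\<bar> \<partial>restrict_space lborel Y) \<le> \<eta>
            \<Longrightarrow> hellinger Y f g < r"
proof -
  define M where "M = restrict_space lborel Y"
  define s0 where "s0 = (\<integral>y. (sqrt (f y) - sqrt (g0 y))\<^sup>2 \<partial>M)"
  have "0 \<le> hellinger Y f g0"
    by (simp add: hellinger_eq_sqrt_integral[OF Y] Bochner_Integration.integral_nonneg)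
  then have "r > 0"
    using \<open>hellinger Y f g0 < r\<close> by linarith
  note hellinger_less = hellinger_less_iff[OF Y \<open>r > 0\<close>, of f, folded M_def]
  have "s0 < 2 * r\<^sup>2"
    using \<open>hellinger Y f g0 < r\<close> by (simp add: hellinger_less s0_def)
  define d where "d = (2 * r\<^sup>2 - s0) / 4"
  define \<eta> where "\<eta> = d / (1 / d + 1)"
  have "d > 0"
    using \<open>s0 < 2 * r\<^sup>2\<close> by (simp add: d_def)
  then have "1 / d + 1 > 0"
    by (simp add: add_pos_pos)
  then have "\<eta> > 0" and d_eq: "(1 / d + 1) * \<eta> = d"
    using \<open>d > 0\<close> by (simp_all add: \<eta>_def)
  show ?thesis
  proof
    show "\<eta> > 0" by fact
    fix g assume g: "g \<in> densities Y"
      and close: "(\<integral>\<^sup>+y. ennreal \<bar>g y - g0 y\<bar> \<partial>restrict_space lborel Y) \<le> \<eta>"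
    have diff_integrable: "integrable M (\<lambda>y. \<bar>g y - g0 y\<bar>)"
      using densitiesD(3)[OF Y] g g0 by (auto simp: M_def)
    then have "(\<integral>y. \<bar>g y - g0 y\<bar> \<partial>M) \<le> \<eta>"
      using close \<open>\<eta> > 0\<close> nn_integral_eq_integral[OF diff_integrable] by (simp add: M_def ennreal_le_iff)
    then have "(1 / d + 1) * (\<integral>y. \<bar>g y - g0 y\<bar> \<partial>M) \<le> (1 / d + 1) * \<eta>"
      using \<open>1 / d + 1 > 0\<close> by (intro mult_left_mono) auto
    then have L1: "(1 / d + 1) * (\<integral>y. \<bar>g y - g0 y\<bar> \<partial>M) \<le> d"
      using d_eq by simp
    have "s0 + d + x < 2 * r\<^sup>2" if "x \<le> d" for x
      using that \<open>s0 < 2 * r\<^sup>2\<close> by (simp add: d_def field_simps)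
    then have "s0 + d + (1 / d + 1) * (\<integral>y. \<bar>g y - g0 y\<bar> \<partial>M) < 2 * r\<^sup>2"
      using L1 .
    moreover have "(\<integral>y. (sqrt (f y) - sqrt (g y))\<^sup>2 \<partial>M) \<le> s0 + d + (1 / d + 1) * (\<integral>y. \<bar>g y - g0 y\<bar> \<partial>M)"
      using hellinger_integral_le_L1[OF Y f g g0 \<open>d > 0\<close>] by (simp add: M_def s0_def)
    ultimately show "hellinger Y f g < r"
      unfolding hellinger_less by linarith
  qed
qed

lemma (in pair_sigma_finite) nn_integral_abs_integral_le:
  fixes F :: "'a \<Rightarrow> 'b \<Rightarrow> real"
  assumes "case_prod F \<in> borel_measurable (M1 \<Otimes>\<^sub>M M2)"
  shows "(\<integral>\<^sup>+x. ennreal \<bar>\<integral>y. F x y \<partial>M2\<bar> \<partial>M1) \<le> (\<integral>\<^sup>+y. \<integral>\<^sup>+x. ennreal \<bar>F x y\<bar> \<partial>M1 \<partial>M2)"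
proof -
  have "(\<integral>\<^sup>+x. ennreal \<bar>\<integral>y. F x y \<partial>M2\<bar> \<partial>M1) \<le> (\<integral>\<^sup>+x. \<integral>\<^sup>+y. ennreal \<bar>F x y\<bar> \<partial>M2 \<partial>M1)"
  proof (rule nn_integral_mono)
    fix x
    show "ennreal \<bar>\<integral>y. F x y \<partial>M2\<bar> \<le> (\<integral>\<^sup>+y. ennreal \<bar>F x y\<bar> \<partial>M2)"
      using integral_norm_bound_ennreal[of M2 "F x"]
      by (cases "integrable M2 (F x)") (simp_all add: not_integrable_integral_eq)
  qed
  also have "\<dots> = (\<integral>\<^sup>+y. \<integral>\<^sup>+x. ennreal \<bar>F x y\<bar> \<partial>M1 \<partial>M2)"
    by (rule Fubini'[symmetric]) (use assms in measurable)
  finally show ?thesis .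
qed

lemma abs_diff_sum_le_convex:
  fixes a :: real and w b :: "nat \<Rightarrow> real"
  assumes "0 \<le> a" and "\<And>i. 0 \<le> w i" and "(\<Sum>i<n. w i) \<le> 1"
  shows "\<bar>a - (\<Sum>i<n. w i * b i)\<bar> \<le> (1 - (\<Sum>i<n. w i)) * a + (\<Sum>i<n. w i * \<bar>a - b i\<bar>)"
proof -
  have "a - (\<Sum>i<n. w i * b i) = (1 - (\<Sum>i<n. w i)) * a + (\<Sum>i<n. w i * (a - b i))"
    by (simp add: algebra_simps sum_distrib_left sum_subtractf)
  also have "\<bar>\<dots>\<bar> \<le> \<bar>(1 - (\<Sum>i<n. w i)) * a\<bar> + \<bar>\<Sum>i<n. w i * (a - b i)\<bar>"
    by (rule abs_triangle_ineq)
  also have "\<bar>\<Sum>i<n. w i * (a - b i)\<bar> \<le> (\<Sum>i<n. w i * \<bar>a - b i\<bar>)"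
    using sum_abs[of "\<lambda>i. w i * (a - b i)" "{..<n}"] assms(2) by (simp add: abs_mult)
  finally show ?thesis
    using assms(1,3) by simp
qed

lemma nn_integral_abs_diff_triangle:
  assumes "f \<in> borel_measurable M" and "g \<in> borel_measurable M" and "h \<in> borel_measurable M"
  shows "(\<integral>\<^sup>+x. ennreal \<bar>f x - h x\<bar> \<partial>M)
           \<le> (\<integral>\<^sup>+x. ennreal \<bar>f x - g x\<bar> \<partial>M) + (\<integral>\<^sup>+x. ennreal \<bar>g x - h x\<bar> \<partial>M)"
proof -
  have "(\<integral>\<^sup>+x. ennreal \<bar>f x - h x\<bar> \<partial>M) \<le> (\<integral>\<^sup>+x. ennreal \<bar>f x - g x\<bar> + ennreal \<bar>g x - h x\<bar> \<partial>M)"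
    by (intro nn_integral_mono) (simp flip: ennreal_plus add: ennreal_leI)
  also have "\<dots> = (\<integral>\<^sup>+x. ennreal \<bar>f x - g x\<bar> \<partial>M) + (\<integral>\<^sup>+x. ennreal \<bar>g x - h x\<bar> \<partial>M)"
    using assms by (intro nn_integral_add) auto
  finally show ?thesis .
qed

lemma countable_ball_cover:
  fixes S :: "'a::{metric_space, second_countable_topology} set"
  assumes "S \<noteq> {}" and "\<And>x. x \<in> S \<Longrightarrow> \<exists>r>0. P x r"
  obtains c :: "nat \<Rightarrow> 'a" and r :: "nat \<Rightarrow> real"
  where "\<And>n. P (c n) (r n)" and "\<And>n. r n > 0" and "S \<subseteq> (\<Union>n. ball (c n) (r n))"
proof -
  define \<F> where "\<F> = {ball x r | x r. r > 0 \<and> P x r}"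
  obtain \<F>' where \<F>': "\<F>' \<subseteq> \<F>" "countable \<F>'" "\<Union>\<F>' = \<Union>\<F>"
    using Lindelof[of \<F>] unfolding \<F>_def by blast
  have cover: "S \<subseteq> \<Union>\<F>'"
  proof
    fix x assume "x \<in> S"
    then obtain r where "r > 0" "P x r"
      using assms(2) by blast
    then have "ball x r \<in> \<F>" "x \<in> ball x r"
      unfolding \<F>_def by auto
    then show "x \<in> \<Union>\<F>'"
      using \<F>'(3) by blast
  qed
  with \<open>S \<noteq> {}\<close> have "\<F>' \<noteq> {}"
    by blast
  have "\<exists>x r. from_nat_into \<F>' n = ball x r \<and> P x r \<and> r > 0" for n
    using from_nat_into[OF \<open>\<F>' \<noteq> {}\<close>, of n] \<F>'(1) unfolding \<F>_def by blast
  then obtain c r where cr: "\<And>n. from_nat_into \<F>' n = ball (c n) (r n) \<and> P (c n) (r n) \<and> r n > 0"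
    by metis
  show ?thesis
  proof
    show "P (c n) (r n)" "r n > 0" for n
      using cr by blast+
    show "S \<subseteq> (\<Union>n. ball (c n) (r n))"
    proof
      fix x assume "x \<in> S"
      then obtain B where "B \<in> \<F>'" "x \<in> B"
        using cover by blast
      then obtain n where "B = from_nat_into \<F>' n"
        using from_nat_into_surj[OF \<F>'(2)] by metis
      with \<open>x \<in> B\<close> cr show "x \<in> (\<Union>n. ball (c n) (r n))"
        by auto
    qed
  qed
qed

primrec running_max :: "(nat \<Rightarrow> 'a \<Rightarrow> real) \<Rightarrow> nat \<Rightarrow> 'a \<Rightarrow> real" where
  "running_max b 0 x = 0"
| "running_max b (Suc n) x = max (running_max b n x) (b n x)"

lemma running_max_nonneg: "0 \<le> running_max b n x"
  by (induction n) auto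

lemma running_max_le: "(\<And>j. b j x \<le> B) \<Longrightarrow> 0 \<le> B \<Longrightarrow> running_max b n x \<le> B"
  by (induction n) auto

lemma running_max_mono: "m \<le> n \<Longrightarrow> running_max b m x \<le> running_max b n x"
proof (induction n)
  case (Suc n)
  then show ?case
    by (cases "m = Suc n") (auto simp: le_Suc_eq intro: max.coboundedI1)
qed simp

lemma running_max_ge: "j < n \<Longrightarrow> b j x \<le> running_max b n x"
  using running_max_mono[of "Suc j" n b x] by simp

lemma continuous_on_running_max:
  "(\<And>j. continuous_on S (b j)) \<Longrightarrow> continuous_on S (running_max b n)"
proof (induction n)
  case (Suc n)
  have "running_max b (Suc n) = (\<lambda>x. max (running_max b n x) (b n x))"
    by auto
  then show ?case
    using Suc by (simp add: continuous_on_max)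
qed simp

lemma sum_running_max_increments:
  "(\<Sum>i<n. running_max b (Suc i) x - running_max b i x) = running_max b n x"
  using sum_lessThan_telescope[of "\<lambda>i. running_max b i x" n] by simp

lemma running_max_increment_pos:
  "running_max b (Suc i) x - running_max b i x > 0 \<Longrightarrow> b i x > 0"
  using running_max_nonneg[of b i x] by (auto simp: max_def split: if_splits)

definition bump :: "'a::metric_space \<Rightarrow> real \<Rightarrow> 'a \<Rightarrow> real" where
  "bump c r x = max 0 (min 1 (2 - dist x c / r))"

lemma continuous_on_bump: "continuous_on S (bump c r)"
  unfolding bump_def divide_inverse by (intro continuous_intros)

lemma bump_bounds: "0 \<le> bump c r x" "bump c r x \<le> 1"
  unfolding bump_def by auto

lemma bump_eq_1:
  assumes "x \<in> ball c r"
  shows "bump c r x = 1"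
proof -
  have "dist x c < r"
    using assms by (simp add: dist_commute)
  moreover have "r > 0"
    using \<open>dist x c < r\<close> zero_le_dist[of x c] by linarith
  ultimately have "dist x c / r < 1"
    by (simp add: divide_less_eq)
  then show ?thesis
    by (simp add: bump_def)
qed

lemma bump_pos_imp:
  assumes "r > 0" and "bump c r x > 0"
  shows "x \<in> cball c (2 * r)"
proof -
  have "dist x c / r < 2"
    using assms(2) by (auto simp: bump_def)
  then show ?thesis
    using assms(1) by (simp add: dist_commute divide_less_eq)
qed

lemma running_max_bumps_le_1: "running_max (\<lambda>j. bump (c j) (r j)) n x \<le> 1"
  by (intro running_max_le bump_bounds) simp

lemma running_max_bumps_tendsto:
  assumes "x \<in> ball (c j) (r j)"
  shows "(\<lambda>n. running_max (\<lambda>j. bump (c j) (r j)) n x) \<longlonglongrightarrow> 1"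
proof -
  have "running_max (\<lambda>j. bump (c j) (r j)) n x = 1" if "j < n" for n
    using running_max_ge[OF that, of "\<lambda>j. bump (c j) (r j)" x] running_max_bumps_le_1[of c r n x]
      bump_eq_1[OF assms] by simp
  then have "eventually (\<lambda>n. running_max (\<lambda>j. bump (c j) (r j)) n x = 1) sequentially"
    unfolding eventually_sequentially by (intro exI[of _ "Suc j"] allI impI) simp
  then show ?thesis
    by (rule tendsto_eventually)
qed

locale mixture_kernel =
  fixes k :: "real \<Rightarrow> real \<times> real \<Rightarrow> real" and Y :: "real set" and \<Gamma> \<Gamma>0 :: "(real \<times> real) set"
  assumes Y_borel: "Y \<in> sets borel"
    and \<Gamma>0_borel: "\<Gamma>0 \<in> sets borel" and \<Gamma>0_subset: "\<Gamma>0 \<subseteq> \<Gamma>"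
    and open_nondegenerate: "open (\<Gamma> - \<Gamma>0)"
    and kernel_measurable: "case_prod k \<in> borel_measurable borel"
    and kernel_density: "\<And>p. p \<in> \<Gamma> - \<Gamma>0 \<Longrightarrow> (\<lambda>y. k y p) \<in> densities Y"
    and kernel_continuous: "\<And>y. y \<in> Y \<Longrightarrow> continuous_on (\<Gamma> - \<Gamma>0) (k y)"
begin

abbreviation "\<Omega> \<equiv> \<Gamma> - \<Gamma>0"
abbreviation "lborel_Y \<equiv> restrict_space lborel Y"

abbreviation kernel_dist :: "real \<times> real \<Rightarrow> real \<times> real \<Rightarrow> ennreal" where
  "kernel_dist p q \<equiv> \<integral>\<^sup>+y. ennreal \<bar>k y p - k y q\<bar> \<partial>lborel_Y"

lemma space_lborel_Y [simp]: "space lborel_Y = Y"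
  by (simp add: space_restrict_space)

lemma kernel_nonneg: "p \<in> \<Omega> \<Longrightarrow> y \<in> Y \<Longrightarrow> 0 \<le> k y p"
  using densitiesD(2)[OF Y_borel kernel_density] by blast

lemma kernel_measurable_y: "p \<in> \<Omega> \<Longrightarrow> (\<lambda>y. k y p) \<in> borel_measurable lborel_Y"
  using densitiesD(1)[OF Y_borel kernel_density] by blast

lemma kernel_integrable: "p \<in> \<Omega> \<Longrightarrow> integrable lborel_Y (\<lambda>y. k y p)"
  using densitiesD(3)[OF Y_borel kernel_density] by blast

lemma kernel_nn_integral: "p \<in> \<Omega> \<Longrightarrow> (\<integral>\<^sup>+y. ennreal (k y p) \<partial>lborel_Y) = 1"
  using kernel_density[of p] densities_iff[OF Y_borel] by simp

lemma kernel_nn_integral_abs: "p \<in> \<Omega> \<Longrightarrow> (\<integral>\<^sup>+y. ennreal \<bar>k y p\<bar> \<partial>lborel_Y) = 1"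
  by (subst nn_integral_cong[where v = "\<lambda>y. ennreal (k y p)"]) (auto simp: kernel_nonneg kernel_nn_integral)

lemma kernel_measurable_pair:
  assumes "sets G = sets (restrict_space borel \<Gamma>)"
  shows "(\<lambda>x. k (fst x) (snd x)) \<in> borel_measurable (lborel_Y \<Otimes>\<^sub>M G)"
proof -
  have "(\<lambda>y. y) \<in> lborel_Y \<rightarrow>\<^sub>M borel"
    by (intro measurable_restrict_space1) (simp add: measurable_ident_sets)
  moreover have "(\<lambda>p. p) \<in> G \<rightarrow>\<^sub>M borel"
    by (simp add: measurable_cong_sets[OF assms refl] measurable_restrict_space1)
  ultimately have "(\<lambda>x. (fst x, snd x)) \<in> lborel_Y \<Otimes>\<^sub>M G \<rightarrow>\<^sub>M borel \<Otimes>\<^sub>M borel"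
    by measurable
  then have "(\<lambda>x. (fst x, snd x)) \<in> lborel_Y \<Otimes>\<^sub>M G \<rightarrow>\<^sub>M borel"
    by (simp only: borel_prod)
  from measurable_compose[OF this kernel_measurable] show ?thesis
    by simp
qed

lemma kernel_dist_tendsto:
  assumes "p \<in> \<Omega>"
  shows "((\<lambda>q. kernel_dist q p) \<longlongrightarrow> 0) (at p)"
proof -
  have "((\<lambda>q. kernel_dist q p) \<longlongrightarrow> 0) (at p within \<Omega>)"
    unfolding tendsto_at_iff_sequentially comp_def
  proof (intro allI impI)
    fix X assume X: "\<forall>i. X i \<in> \<Omega> - {p}" "X \<longlonglongrightarrow> p"
    have "(\<lambda>n. \<integral>\<^sup>+y. ennreal (norm (k y (X n) - k y p)) \<partial>lborel_Y) \<longlonglongrightarrow> 0"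
    proof (rule Scheffe_lemma2)
      show "(\<lambda>y. k y (X n)) \<in> borel_measurable lborel_Y" for n
        using X by (intro kernel_measurable_y) auto
      show "integrable lborel_Y (\<lambda>y. k y p)"
        by (rule kernel_integrable[OF assms])
      show "AE y in lborel_Y. (\<lambda>n. k y (X n)) \<longlonglongrightarrow> k y p"
      proof (rule AE_I2)
        fix y assume "y \<in> space lborel_Y"
        then show "(\<lambda>n. k y (X n)) \<longlonglongrightarrow> k y p"
          using X by (intro continuous_on_tendsto_compose[OF kernel_continuous _ assms]) auto
      qed
      have "X n \<in> \<Omega>" for n
        using X by blast
      then show "(\<integral>\<^sup>+y. ennreal (norm (k y (X n))) \<partial>lborel_Y) \<le> (\<integral>\<^sup>+y. ennreal (norm (k y p)) \<partial>lborel_Y)" for n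
        using assms by (simp add: kernel_nn_integral_abs)
    qed
    then show "(\<lambda>n. kernel_dist (X n) p) \<longlonglongrightarrow> 0"
      by simp
  qed
  moreover have "at p within \<Omega> = at p"
    by (rule at_within_open[OF assms open_nondegenerate])
  ultimately show ?thesis
    by simp
qed

lemma kernel_dist_small_on_ball:
  assumes "p \<in> \<Omega>" and "(e::real) > 0"
  shows "\<exists>r>0. cball p (2 * r) \<subseteq> \<Omega> \<and> (\<forall>q\<in>cball p (2 * r). kernel_dist q p \<le> e)"
proof -
  have "eventually (\<lambda>q. kernel_dist q p < e) (at p)"
    using kernel_dist_tendsto[OF assms(1)] assms(2) by (intro order_tendstoD) auto
  then obtain d where "d > 0" and d: "\<And>q. q \<noteq> p \<Longrightarrow> dist q p < d \<Longrightarrow> kernel_dist q p < e"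
    unfolding eventually_at by blast
  obtain d' where "d' > 0" "ball p d' \<subseteq> \<Omega>"
    using open_nondegenerate assms(1) open_contains_ball by blast
  define r where "r = min d d' / 3"
  show ?thesis
  proof (intro exI conjI ballI)
    show "r > 0"
      using \<open>d > 0\<close> \<open>d' > 0\<close> by (simp add: r_def)
    have small: "dist q p < d \<and> dist p q < d'" if "q \<in> cball p (2 * r)" for q
      using that \<open>d > 0\<close> \<open>d' > 0\<close> by (auto simp: r_def dist_commute)
    then have "cball p (2 * r) \<subseteq> ball p d'"
      by (meson mem_ball subsetI)
    then show "cball p (2 * r) \<subseteq> \<Omega>"
      using \<open>ball p d' \<subseteq> \<Omega>\<close> by (rule order_trans)
    fix q assume "q \<in> cball p (2 * r)"
    then show "kernel_dist q p \<le> e"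
      using d[of q] small by (cases "q = p") (auto intro: less_imp_le)
  qed
qed

lemma kernel_dist_small_ball_cover:
  assumes "\<Omega> \<noteq> {}" and "(e::real) > 0"
  obtains c :: "nat \<Rightarrow> real \<times> real" and r :: "nat \<Rightarrow> real"
  where "\<And>j. cball (c j) (2 * r j) \<subseteq> \<Omega> \<and> (\<forall>p\<in>cball (c j) (2 * r j). kernel_dist p (c j) \<le> e)"
    and "\<And>j. r j > 0" and "\<Omega> \<subseteq> (\<Union>j. ball (c j) (r j))"
proof (rule countable_ball_cover[OF \<open>\<Omega> \<noteq> {}\<close>])
  show "\<exists>r>0. cball p (2 * r) \<subseteq> \<Omega> \<and> (\<forall>q\<in>cball p (2 * r). kernel_dist q p \<le> e)" if "p \<in> \<Omega>" for p
    using that \<open>e > 0\<close> by (rule kernel_dist_small_on_ball)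
  fix c :: "nat \<Rightarrow> real \<times> real" and r :: "nat \<Rightarrow> real"
  assume "\<And>j. cball (c j) (2 * r j) \<subseteq> \<Omega> \<and> (\<forall>p\<in>cball (c j) (2 * r j). kernel_dist p (c j) \<le> e)"
    and "\<And>j. r j > 0" and "\<Omega> \<subseteq> (\<Union>j. ball (c j) (r j))"
  from that[OF this] show thesis .
qed

lemma nn_integral_abs_kernel_minus_combination_le:
  fixes n :: nat
  assumes "p \<in> \<Omega>" and q: "\<And>i. i < n \<Longrightarrow> q i \<in> \<Omega>"
    and w: "\<And>i. 0 \<le> w i" and "(\<Sum>i<n. w i) \<le> 1"
  shows "(\<integral>\<^sup>+y. ennreal \<bar>k y p - (\<Sum>i<n. w i * k y (q i))\<bar> \<partial>lborel_Y)
           \<le> ennreal (1 - (\<Sum>i<n. w i)) + (\<Sum>i<n. ennreal (w i) * kernel_dist p (q i))"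
proof -
  let ?S = "\<Sum>i<n. w i"
  note [measurable] = kernel_measurable_y[OF \<open>p \<in> \<Omega>\<close>]
  have [measurable]: "(\<lambda>y. k y (q i)) \<in> borel_measurable lborel_Y" if "i \<in> {..<n}" for i
    using q that by (intro kernel_measurable_y) auto
  have "(\<integral>\<^sup>+y. ennreal \<bar>k y p - (\<Sum>i<n. w i * k y (q i))\<bar> \<partial>lborel_Y)
      \<le> (\<integral>\<^sup>+y. ennreal (1 - ?S) * ennreal (k y p) + (\<Sum>i<n. ennreal (w i) * ennreal \<bar>k y p - k y (q i)\<bar>) \<partial>lborel_Y)"
  proof (rule nn_integral_mono)
    fix y assume "y \<in> space lborel_Y"
    then have y: "y \<in> Y"
      by simp
    then have "\<bar>k y p - (\<Sum>i<n. w i * k y (q i))\<bar> \<le> (1 - ?S) * k y p + (\<Sum>i<n. w i * \<bar>k y p - k y (q i)\<bar>)"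
      using abs_diff_sum_le_convex[OF kernel_nonneg[OF \<open>p \<in> \<Omega>\<close> y] w \<open>?S \<le> 1\<close>] by simp
    then show "ennreal \<bar>k y p - (\<Sum>i<n. w i * k y (q i))\<bar>
        \<le> ennreal (1 - ?S) * ennreal (k y p) + (\<Sum>i<n. ennreal (w i) * ennreal \<bar>k y p - k y (q i)\<bar>)"
      using y assms by (simp add: ennreal_mult'[symmetric] sum_nonneg kernel_nonneg ennreal_leI flip: ennreal_plus)
  qed
  also have "\<dots> = ennreal (1 - ?S) * (\<integral>\<^sup>+y. ennreal (k y p) \<partial>lborel_Y) + (\<Sum>i<n. ennreal (w i) * kernel_dist p (q i))"
    by (simp add: nn_integral_add nn_integral_sum nn_integral_cmult)
  finally show ?thesis
    by (simp add: kernel_nn_integral[OF \<open>p \<in> \<Omega>\<close>])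
qed

lemma kernel_dist_sub_convex_combination_le:
  fixes n :: nat
  assumes "p \<in> \<Omega>" and q: "\<And>i. i < n \<Longrightarrow> q i \<in> \<Omega>"
    and w: "\<And>i. 0 \<le> w i" and "(\<Sum>i<n. w i) \<le> 1"
    and close: "\<And>i. i < n \<Longrightarrow> 0 < w i \<Longrightarrow> kernel_dist p (q i) \<le> e" and "0 \<le> e"
  shows "(\<integral>\<^sup>+y. ennreal \<bar>k y p - (\<Sum>i<n. w i * k y (q i))\<bar> \<partial>lborel_Y) \<le> ennreal (1 - (\<Sum>i<n. w i) + e)"
proof -
  let ?S = "\<Sum>i<n. w i"
  have "(\<Sum>i<n. ennreal (w i) * kernel_dist p (q i)) \<le> (\<Sum>i<n. ennreal (w i) * ennreal e)"
  proof (rule sum_mono)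
    fix i assume "i \<in> {..<n}"
    show "ennreal (w i) * kernel_dist p (q i) \<le> ennreal (w i) * ennreal e"
    proof (cases "w i = 0")
      case False
      then show ?thesis
        using w[of i] close \<open>i \<in> {..<n}\<close> by (intro mult_left_mono) auto
    qed simp
  qed
  also have "\<dots> = ennreal (?S * e)"
    using w \<open>0 \<le> e\<close> by (simp add: ennreal_mult'[symmetric] sum_distrib_right)
  finally have close_sum: "(\<Sum>i<n. ennreal (w i) * kernel_dist p (q i)) \<le> ennreal (?S * e)" .
  have "(\<integral>\<^sup>+y. ennreal \<bar>k y p - (\<Sum>i<n. w i * k y (q i))\<bar> \<partial>lborel_Y)
      \<le> ennreal (1 - ?S) + (\<Sum>i<n. ennreal (w i) * kernel_dist p (q i))"
    using \<open>p \<in> \<Omega>\<close> q w \<open>?S \<le> 1\<close> by (rule nn_integral_abs_kernel_minus_combination_le)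
  also have "\<dots> \<le> ennreal (1 - ?S) + ennreal (?S * e)"
    using close_sum by (rule add_left_mono)
  also have "\<dots> = ennreal (1 - ?S + ?S * e)"
    using w \<open>?S \<le> 1\<close> \<open>0 \<le> e\<close> by (simp add: sum_nonneg flip: ennreal_plus)
  also have "\<dots> \<le> ennreal (1 - ?S + e)"
    using w \<open>?S \<le> 1\<close> \<open>0 \<le> e\<close> by (intro ennreal_leI) (simp add: mult_left_le_one_le sum_nonneg)
  finally show ?thesis .
qed

lemma nn_integral_abs_finite_mixtures_diff_le:
  fixes n :: nat
  assumes q: "\<And>i. i < n \<Longrightarrow> q i \<in> \<Omega>"
  shows "(\<integral>\<^sup>+y. ennreal \<bar>(\<Sum>i<n. a i * k y (q i)) - (\<Sum>i<n. b i * k y (q i))\<bar> \<partial>lborel_Y)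
           \<le> ennreal (\<Sum>i<n. \<bar>a i - b i\<bar>)"
proof -
  have [measurable]: "(\<lambda>y. k y (q i)) \<in> borel_measurable lborel_Y" if "i \<in> {..<n}" for i
    using q that by (intro kernel_measurable_y) auto
  have "(\<integral>\<^sup>+y. ennreal \<bar>(\<Sum>i<n. a i * k y (q i)) - (\<Sum>i<n. b i * k y (q i))\<bar> \<partial>lborel_Y)
      \<le> (\<integral>\<^sup>+y. (\<Sum>i<n. ennreal \<bar>a i - b i\<bar> * ennreal (k y (q i))) \<partial>lborel_Y)"
  proof (rule nn_integral_mono)
    fix y assume "y \<in> space lborel_Y"
    then have y: "y \<in> Y"
      by simp
    have "\<bar>(\<Sum>i<n. a i * k y (q i)) - (\<Sum>i<n. b i * k y (q i))\<bar> = \<bar>\<Sum>i<n. (a i - b i) * k y (q i)\<bar>"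
      by (simp add: sum_subtractf left_diff_distrib)
    also have "\<dots> \<le> (\<Sum>i<n. \<bar>(a i - b i) * k y (q i)\<bar>)"
      by (rule sum_abs)
    also have "\<dots> = (\<Sum>i<n. \<bar>a i - b i\<bar> * k y (q i))"
      using q y by (intro sum.cong) (auto simp: abs_mult kernel_nonneg)
    finally have bound: "\<bar>(\<Sum>i<n. a i * k y (q i)) - (\<Sum>i<n. b i * k y (q i))\<bar>
        \<le> (\<Sum>i<n. \<bar>a i - b i\<bar> * k y (q i))" .
    have "0 \<le> \<bar>a i - b i\<bar> * k y (q i)" if "i \<in> {..<n}" for i
      using q that y by (auto intro!: mult_nonneg_nonneg kernel_nonneg)
    then have "(\<Sum>i<n. ennreal (\<bar>a i - b i\<bar> * k y (q i))) = ennreal (\<Sum>i<n. \<bar>a i - b i\<bar> * k y (q i))"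
      by (rule sum_ennreal)
    moreover have "(\<Sum>i<n. ennreal \<bar>a i - b i\<bar> * ennreal (k y (q i))) = (\<Sum>i<n. ennreal (\<bar>a i - b i\<bar> * k y (q i)))"
      by (simp add: ennreal_mult')
    ultimately show "ennreal \<bar>(\<Sum>i<n. a i * k y (q i)) - (\<Sum>i<n. b i * k y (q i))\<bar>
        \<le> (\<Sum>i<n. ennreal \<bar>a i - b i\<bar> * ennreal (k y (q i)))"
      using bound by (simp add: ennreal_leI)
  qed
  also have "\<dots> = (\<Sum>i<n. ennreal \<bar>a i - b i\<bar>)"
    using q by (simp add: nn_integral_sum nn_integral_cmult kernel_nn_integral)
  finally show ?thesis
    by simp
qed

context
  fixes G assumes G: "G \<in> Dk \<Gamma> \<Gamma>0"
begin

lemma prob_space_mixing: "prob_space G"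
  and sets_mixing: "sets G = sets (restrict_space borel \<Gamma>)"
  using prob_measuresD G by (auto simp: Dk_def)

interpretation G: prob_space G by (rule prob_space_mixing)

interpretation pair_sigma_finite lborel_Y G
  by (intro pair_sigma_finite.intro sigma_finite_measure_restrict_space
      lborel.sigma_finite_measure_axioms G.sigma_finite_measure_axioms) (simp add: Y_borel)

lemma borel_measurable_mixing: "f \<in> borel_measurable borel \<Longrightarrow> f \<in> borel_measurable G"
  using G unfolding Dk_def by (blast intro: borel_measurable_prob_measure)

lemma AE_nondegenerate: "AE p in G. p \<in> \<Omega>"
proof -
  have "\<Gamma>0 \<in> sets G"
    using \<Gamma>0_borel \<Gamma>0_subset
    by (auto simp: sets_mixing sets_restrict_space intro!: image_eqI[where x = \<Gamma>0])
  then have "AE p in G. p \<notin> \<Gamma>0"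
    using G by (intro AE_I[where N = \<Gamma>0]) (auto simp: Dk_def)
  moreover have "space G = \<Gamma>"
    using prob_measuresD(3) G by (auto simp: Dk_def)
  ultimately show ?thesis
    by (auto elim: eventually_mono)
qed

lemma nondegenerate_nonempty: "\<Omega> \<noteq> {}"
proof
  assume "\<Omega> = {}"
  with AE_nondegenerate have "AE p in G. False"
    by (rule_tac eventually_mono) auto
  then show False
    using G.AE_False by simp
qed

lemma kernel_measurable_p: "y \<in> Y \<Longrightarrow> k y \<in> borel_measurable G"
  using measurable_Pair2[OF kernel_measurable_pair[OF sets_mixing], of y] by simp

lemmas kernel_measurable_mixing [measurable] = kernel_measurable_pair[OF sets_mixing]

lemma nn_integral_kernel_mixing: "(\<integral>\<^sup>+y. \<integral>\<^sup>+p. ennreal (k y p) \<partial>G \<partial>lborel_Y) = 1"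
proof -
  have "(\<integral>\<^sup>+y. \<integral>\<^sup>+p. ennreal (k y p) \<partial>G \<partial>lborel_Y) = (\<integral>\<^sup>+p. \<integral>\<^sup>+y. ennreal (k y p) \<partial>lborel_Y \<partial>G)"
    by (rule Fubini'[symmetric]) (simp add: split_beta')
  also have "\<dots> = (\<integral>\<^sup>+p. 1 \<partial>G)"
    using AE_nondegenerate by (intro nn_integral_cong_AE) (auto elim: eventually_mono simp: kernel_nn_integral)
  finally show ?thesis
    by (simp add: G.emeasure_space_1)
qed

text \<open>The Bochner integral defining mixture k G y is 0 wherever k y fails to be G-integrable;
  by Tonelli this happens only on a Lebesgue null set of y.\<close>

lemma AE_integrable_kernel: "AE y in lborel_Y. integrable G (k y)"
proof -
  have "AE y in lborel_Y. (\<integral>\<^sup>+p. ennreal (k y p) \<partial>G) \<noteq> \<infinity>"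
    by (rule nn_integral_PInf_AE) (simp_all add: nn_integral_kernel_mixing)
  moreover have "AE p in G. 0 \<le> k y p" if "y \<in> Y" for y
    using AE_nondegenerate by (rule eventually_mono) (simp add: kernel_nonneg that)
  ultimately show ?thesis
    by (auto intro!: integrableI_nonneg kernel_measurable_p simp: less_top)
qed

lemma mixture_eq_nn_integral:
  assumes "y \<in> Y" and "integrable G (k y)"
  shows "ennreal (mixture k G y) = (\<integral>\<^sup>+p. ennreal (k y p) \<partial>G)"
  unfolding mixture_def
  using AE_nondegenerate assms
  by (intro nn_integral_eq_integral[symmetric]) (auto elim: eventually_mono simp: kernel_nonneg)

lemma mixture_nonneg: "y \<in> Y \<Longrightarrow> 0 \<le> mixture k G y"
  unfolding mixture_def
  using AE_nondegenerate by (intro integral_nonneg_AE) (auto elim: eventually_mono simp: kernel_nonneg)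

lemma mixture_measurable: "mixture k G \<in> borel_measurable lborel_Y"
  unfolding mixture_def by measurable

lemma mixture_in_densities: "mixture k G \<in> densities Y"
proof -
  have "AE y in lborel_Y. ennreal (mixture k G y) = (\<integral>\<^sup>+p. ennreal (k y p) \<partial>G)"
    using AE_integrable_kernel AE_space[of lborel_Y]
    by eventually_elim (simp add: mixture_eq_nn_integral)
  then have "(\<integral>\<^sup>+y. ennreal (mixture k G y) \<partial>lborel_Y) = (\<integral>\<^sup>+y. \<integral>\<^sup>+p. ennreal (k y p) \<partial>G \<partial>lborel_Y)"
    by (rule nn_integral_cong_AE)
  then show ?thesis
    unfolding densities_iff[OF Y_borel]
    by (simp add: mixture_measurable mixture_nonneg nn_integral_kernel_mixing)
qed

lemma integral_running_max_bumps_tendsto: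
  assumes cover: "\<Omega> \<subseteq> (\<Union>j. ball (c j) (r j))"
  shows "(\<lambda>n. \<integral>p. running_max (\<lambda>j. bump (c j) (r j)) n p \<partial>G) \<longlonglongrightarrow> 1"
proof -
  let ?m = "running_max (\<lambda>j. bump (c j) (r j))"
  have "(\<lambda>n. \<integral>p. ?m n p \<partial>G) \<longlonglongrightarrow> (\<integral>p. 1 \<partial>G)"
  proof (rule integral_dominated_convergence[where w = "\<lambda>_. 1"])
    show "?m n \<in> borel_measurable G" for n
      by (intro borel_measurable_mixing borel_measurable_continuous_onI continuous_on_running_max continuous_on_bump)
    show "AE p in G. (\<lambda>n. ?m n p) \<longlonglongrightarrow> 1"
      using AE_nondegenerate
    proof (rule eventually_mono)
      fix p assume "p \<in> \<Omega>"
      then obtain j where "p \<in> ball (c j) (r j)"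
        using cover by blast
      then show "(\<lambda>n. ?m n p) \<longlonglongrightarrow> 1"
        by (rule running_max_bumps_tendsto)
    qed
    show "AE p in G. norm (?m n p) \<le> 1" for n
    proof (rule AE_I2)
      fix p
      show "norm (?m n p) \<le> 1"
        using running_max_nonneg[of "\<lambda>j. bump (c j) (r j)" n p] running_max_bumps_le_1[of c r n p] by simp
    qed
    show "(\<lambda>p. 1) \<in> borel_measurable G" "integrable G (\<lambda>p. 1)"
      by simp_all
  qed
  then show ?thesis
    by (simp add: G.prob_space)
qed

lemma kernel_partition_of_unity:
  assumes "(e::real) > 0"
  obtains \<psi> :: "nat \<Rightarrow> real \<times> real \<Rightarrow> real" and n :: nat and q :: "nat \<Rightarrow> real \<times> real"
  where "\<And>i. continuous_on UNIV (\<psi> i)" and "\<And>i p. 0 \<le> \<psi> i p \<and> \<psi> i p \<le> 1"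
    and "\<And>p. (\<Sum>i<n. \<psi> i p) \<le> 1" and "\<And>i. q i \<in> \<Omega>"
    and "\<And>i p. p \<in> \<Omega> \<Longrightarrow> 0 < \<psi> i p \<Longrightarrow> kernel_dist p (q i) \<le> e"
    and "1 - e \<le> (\<integral>p. (\<Sum>i<n. \<psi> i p) \<partial>G)"
proof -
  obtain c :: "nat \<Rightarrow> real \<times> real" and r :: "nat \<Rightarrow> real"
    where cr: "\<And>j. cball (c j) (2 * r j) \<subseteq> \<Omega> \<and> (\<forall>p\<in>cball (c j) (2 * r j). kernel_dist p (c j) \<le> e)"
      and r_pos: "\<And>j. r j > 0" and cover: "\<Omega> \<subseteq> (\<Union>j. ball (c j) (r j))"
    by (rule kernel_dist_small_ball_cover[OF nondegenerate_nonempty \<open>e > 0\<close>]) (rule that)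
  define b where "b = (\<lambda>j. bump (c j) (r j))"
  \<comment> \<open>increments of the running maximum of the bumps: they telescope to the running maximum,
    and the i-th one is positive only where the i-th bump is\<close>
  define \<psi> where "\<psi> i p = running_max b (Suc i) p - running_max b i p" for i p
  have running_max_le_1: "running_max b n p \<le> 1" for n p
    unfolding b_def by (rule running_max_bumps_le_1)
  have sum_\<psi>: "(\<Sum>i<n. \<psi> i p) = running_max b n p" for n p
    unfolding \<psi>_def by (rule sum_running_max_increments)
  obtain n where n: "1 - e < (\<integral>p. running_max b n p \<partial>G)"
    using order_tendstoD(1)[OF integral_running_max_bumps_tendsto[OF cover], of "1 - e"] \<open>e > 0\<close>
    by (auto simp: b_def eventually_sequentially)
  show ?thesis
  proof
    show "continuous_on UNIV (\<psi> i)" for i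
      unfolding \<psi>_def b_def by (intro continuous_on_diff continuous_on_running_max continuous_on_bump)
    show "0 \<le> \<psi> i p \<and> \<psi> i p \<le> 1" for i p
      using running_max_mono[of i "Suc i" b p] running_max_nonneg[of b i p] running_max_le_1[of "Suc i" p]
      unfolding \<psi>_def by linarith
    show "(\<Sum>i<n. \<psi> i p) \<le> 1" for p
      by (simp add: sum_\<psi> running_max_le_1)
    show "c i \<in> \<Omega>" for i
      using cr[of i] r_pos[of i] centre_in_cball[of "c i" "2 * r i"] by (meson less_imp_le mult_pos_pos subsetD zero_less_numeral)
    show "kernel_dist p (c i) \<le> e" if "p \<in> \<Omega>" and "0 < \<psi> i p" for i p
    proof -
      have "b i p > 0"
        using that(2) unfolding \<psi>_def by (rule running_max_increment_pos)
      then have "p \<in> cball (c i) (2 * r i)"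
        using r_pos[of i] by (intro bump_pos_imp[of "r i"]) (auto simp: b_def)
      then show ?thesis
        using cr[of i] by blast
    qed
    show "1 - e \<le> (\<integral>p. (\<Sum>i<n. \<psi> i p) \<partial>G)"
      using n by (simp add: sum_\<psi>)
  qed
qed

lemma integral_sum_partition:
  fixes \<psi> :: "nat \<Rightarrow> real \<times> real \<Rightarrow> real"
  assumes "\<And>i. \<psi> i \<in> borel_measurable borel" and "\<And>i p. 0 \<le> \<psi> i p \<and> \<psi> i p \<le> 1"
    and "\<And>p. (\<Sum>i<n. \<psi> i p) \<le> 1"
  shows "(\<integral>p. (\<Sum>i<n. \<psi> i p) \<partial>G) = (\<Sum>i<n. \<integral>p. \<psi> i p \<partial>G)"
    and "(\<Sum>i<n. \<integral>p. \<psi> i p \<partial>G) \<le> 1"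
proof -
  have integrable: "integrable G (\<psi> i)" for i
    using assms(1,2) by (intro G.integrable_const_bound[where B = 1] borel_measurable_mixing) auto
  then show *: "(\<integral>p. (\<Sum>i<n. \<psi> i p) \<partial>G) = (\<Sum>i<n. \<integral>p. \<psi> i p \<partial>G)"
    by (simp add: Bochner_Integration.integral_sum)
  show "(\<Sum>i<n. \<integral>p. \<psi> i p \<partial>G) \<le> 1"
    unfolding *[symmetric] using integrable assms(3) by (intro G.integral_le_const) auto
qed

lemma nn_integral_abs_mixture_minus_finite_mixture:
  fixes n :: nat and \<psi> :: "nat \<Rightarrow> real \<times> real \<Rightarrow> real"
  assumes \<psi>: "\<And>i. \<psi> i \<in> borel_measurable borel" "\<And>i p. 0 \<le> \<psi> i p \<and> \<psi> i p \<le> 1"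
      "\<And>p. (\<Sum>i<n. \<psi> i p) \<le> 1"
    and q: "\<And>i. i < n \<Longrightarrow> q i \<in> \<Omega>"
    and close: "\<And>i p. i < n \<Longrightarrow> p \<in> \<Omega> \<Longrightarrow> 0 < \<psi> i p \<Longrightarrow> kernel_dist p (q i) \<le> e"
    and "0 \<le> e"
  shows "(\<integral>\<^sup>+y. ennreal \<bar>mixture k G y - (\<Sum>i<n. (\<integral>p. \<psi> i p \<partial>G) * k y (q i))\<bar> \<partial>lborel_Y)
           \<le> ennreal (1 - (\<Sum>i<n. \<integral>p. \<psi> i p \<partial>G) + e)"
proof -
  define F where "F y p = k y p - (\<Sum>i<n. \<psi> i p * k y (q i))" for y p
  have [measurable]: "\<psi> i \<in> borel_measurable G" for i
    by (rule borel_measurable_mixing[OF \<psi>(1)])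
  have \<psi>_integrable: "integrable G (\<psi> i)" for i
    using \<psi>(2) by (intro G.integrable_const_bound[where B = 1]) auto
  have [measurable]: "(\<lambda>y. k y (q i)) \<in> borel_measurable lborel_Y" if "i \<in> {..<n}" for i
    using q that by (intro kernel_measurable_y) auto
  have "AE y in lborel_Y. mixture k G y - (\<Sum>i<n. (\<integral>p. \<psi> i p \<partial>G) * k y (q i)) = (\<integral>p. F y p \<partial>G)"
    using AE_integrable_kernel
  proof eventually_elim
    case (elim y)
    then show ?case
      unfolding F_def mixture_def using \<psi>_integrable
      by (simp add: Bochner_Integration.integral_diff Bochner_Integration.integral_sum)
  qed
  then have "(\<integral>\<^sup>+y. ennreal \<bar>mixture k G y - (\<Sum>i<n. (\<integral>p. \<psi> i p \<partial>G) * k y (q i))\<bar> \<partial>lborel_Y)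
      = (\<integral>\<^sup>+y. ennreal \<bar>\<integral>p. F y p \<partial>G\<bar> \<partial>lborel_Y)"
    by (intro nn_integral_cong_AE) (auto elim: eventually_mono)
  also have "\<dots> \<le> (\<integral>\<^sup>+p. \<integral>\<^sup>+y. ennreal \<bar>F y p\<bar> \<partial>lborel_Y \<partial>G)"
    by (rule nn_integral_abs_integral_le) (simp add: F_def split_beta')
  also have "\<dots> \<le> (\<integral>\<^sup>+p. ennreal (1 - (\<Sum>i<n. \<psi> i p) + e) \<partial>G)"
    using AE_nondegenerate
  proof (rule nn_integral_mono_AE[OF eventually_mono])
    fix p assume "p \<in> \<Omega>"
    then show "(\<integral>\<^sup>+y. ennreal \<bar>F y p\<bar> \<partial>lborel_Y) \<le> ennreal (1 - (\<Sum>i<n. \<psi> i p) + e)"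
      unfolding F_def using \<psi> q close \<open>0 \<le> e\<close>
      by (intro kernel_dist_sub_convex_combination_le) auto
  qed
  also have "\<dots> = ennreal (1 - (\<Sum>i<n. \<integral>p. \<psi> i p \<partial>G) + e)"
  proof -
    have "integrable G (\<lambda>p. 1 - (\<Sum>i<n. \<psi> i p) + e)"
      using \<psi>_integrable by auto
    moreover have "AE p in G. 0 \<le> 1 - (\<Sum>i<n. \<psi> i p) + e"
    proof (rule AE_I2)
      fix p
      show "0 \<le> 1 - (\<Sum>i<n. \<psi> i p) + e"
        using \<psi>(3)[of p] \<open>0 \<le> e\<close> by linarith
    qed
    ultimately show ?thesis
      using \<psi>_integrable by (simp add: nn_integral_eq_integral Bochner_Integration.integral_sum G.prob_space)
  qed
  finally show ?thesis .
qed

end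

lemma nn_integral_abs_mixtures_diff_le:
  fixes n :: nat and \<psi> :: "nat \<Rightarrow> real \<times> real \<Rightarrow> real"
  assumes G: "G \<in> Dk \<Gamma> \<Gamma>0" and G0: "G0 \<in> Dk \<Gamma> \<Gamma>0"
    and \<psi>: "\<And>i. \<psi> i \<in> borel_measurable borel" "\<And>i p. 0 \<le> \<psi> i p \<and> \<psi> i p \<le> 1"
      "\<And>p. (\<Sum>i<n. \<psi> i p) \<le> 1"
    and q: "\<And>i. i < n \<Longrightarrow> q i \<in> \<Omega>"
    and close: "\<And>i p. i < n \<Longrightarrow> p \<in> \<Omega> \<Longrightarrow> 0 < \<psi> i p \<Longrightarrow> kernel_dist p (q i) \<le> e"
    and "0 \<le> e"
  shows "(\<integral>\<^sup>+y. ennreal \<bar>mixture k G y - mixture k G0 y\<bar> \<partial>lborel_Y)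
           \<le> ennreal ((1 - (\<Sum>i<n. \<integral>p. \<psi> i p \<partial>G) + e)
                     + (\<Sum>i<n. \<bar>(\<integral>p. \<psi> i p \<partial>G) - (\<integral>p. \<psi> i p \<partial>G0)\<bar>)
                     + (1 - (\<Sum>i<n. \<integral>p. \<psi> i p \<partial>G0) + e))"
proof -
  define c where "c H i = (\<integral>p. \<psi> i p \<partial>H)" for H i
  define A where "A H y = (\<Sum>i<n. c H i * k y (q i))" for H y
  have [measurable]: "A H \<in> borel_measurable lborel_Y" for H
    unfolding A_def using q by (intro borel_measurable_sum borel_measurable_times kernel_measurable_y) auto
  have approx: "(\<integral>\<^sup>+y. ennreal \<bar>mixture k H y - A H y\<bar> \<partial>lborel_Y) \<le> ennreal (1 - (\<Sum>i<n. c H i) + e)"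
    if "H \<in> Dk \<Gamma> \<Gamma>0" for H
    unfolding A_def c_def by (rule nn_integral_abs_mixture_minus_finite_mixture[OF that \<psi> q close \<open>0 \<le> e\<close>])
  have middle: "(\<integral>\<^sup>+y. ennreal \<bar>A G y - A G0 y\<bar> \<partial>lborel_Y) \<le> ennreal (\<Sum>i<n. \<bar>c G i - c G0 i\<bar>)"
    unfolding A_def using q by (rule nn_integral_abs_finite_mixtures_diff_le)
  have "(\<integral>\<^sup>+y. ennreal \<bar>mixture k G y - mixture k G0 y\<bar> \<partial>lborel_Y)
      \<le> (\<integral>\<^sup>+y. ennreal \<bar>mixture k G y - A G y\<bar> \<partial>lborel_Y)
        + (\<integral>\<^sup>+y. ennreal \<bar>A G y - mixture k G0 y\<bar> \<partial>lborel_Y)"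
    using mixture_measurable[OF G] mixture_measurable[OF G0] by (intro nn_integral_abs_diff_triangle) auto
  also have "\<dots> \<le> (\<integral>\<^sup>+y. ennreal \<bar>mixture k G y - A G y\<bar> \<partial>lborel_Y)
        + ((\<integral>\<^sup>+y. ennreal \<bar>A G y - A G0 y\<bar> \<partial>lborel_Y)
        + (\<integral>\<^sup>+y. ennreal \<bar>A G0 y - mixture k G0 y\<bar> \<partial>lborel_Y))"
    using mixture_measurable[OF G0] by (intro add_left_mono nn_integral_abs_diff_triangle) auto
  also have "\<dots> \<le> ennreal (1 - (\<Sum>i<n. c G i) + e) + (ennreal (\<Sum>i<n. \<bar>c G i - c G0 i\<bar>) + ennreal (1 - (\<Sum>i<n. c G0 i) + e))"
    using approx[OF G0] by (intro add_mono approx[OF G] middle) (simp add: abs_minus_commute)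
  also have "\<dots> = ennreal ((1 - (\<Sum>i<n. c G i) + e) + (\<Sum>i<n. \<bar>c G i - c G0 i\<bar>) + (1 - (\<Sum>i<n. c G0 i) + e))"
    using integral_sum_partition(2)[OF G \<psi>] integral_sum_partition(2)[OF G0 \<psi>] \<open>0 \<le> e\<close>
    by (simp add: c_def ennreal_plus[symmetric] add.assoc del: ennreal_plus)
  finally show ?thesis
    unfolding c_def .
qed

lemma mixture_L1_neighbourhood:
  assumes G0: "G0 \<in> Dk \<Gamma> \<Gamma>0" and "(e::real) > 0"
  obtains N where "openin (weak_conv_topology \<Gamma>) N" and "G0 \<in> N"
    and "\<And>G. G \<in> N \<Longrightarrow> G \<in> Dk \<Gamma> \<Gamma>0
           \<Longrightarrow> (\<integral>\<^sup>+y. ennreal \<bar>mixture k G y - mixture k G0 y\<bar> \<partial>lborel_Y) \<le> e"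
proof -
  define \<epsilon> where "\<epsilon> = e / 6"
  have "\<epsilon> > 0"
    using \<open>e > 0\<close> by (simp add: \<epsilon>_def)
  obtain \<psi> :: "nat \<Rightarrow> real \<times> real \<Rightarrow> real" and n :: nat and q :: "nat \<Rightarrow> real \<times> real"
    where \<psi>_cont: "\<And>i. continuous_on UNIV (\<psi> i)"
    and \<psi>: "\<And>i p. 0 \<le> \<psi> i p \<and> \<psi> i p \<le> 1" "\<And>p. (\<Sum>i<n. \<psi> i p) \<le> 1"
    and q: "\<And>i. q i \<in> \<Omega>" and close: "\<And>i p. p \<in> \<Omega> \<Longrightarrow> 0 < \<psi> i p \<Longrightarrow> kernel_dist p (q i) \<le> \<epsilon>"
    and mass: "1 - \<epsilon> \<le> (\<integral>p. (\<Sum>i<n. \<psi> i p) \<partial>G0)"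
    by (rule kernel_partition_of_unity[OF G0 \<open>\<epsilon> > 0\<close>]) (rule that)
  have \<psi>_measurable: "\<psi> i \<in> borel_measurable borel" for i
    by (rule borel_measurable_continuous_onI[OF \<psi>_cont])
  define c where "c G i = (\<integral>p. \<psi> i p \<partial>G)" for G i
  define N where "N = {G \<in> prob_measures \<Gamma>. \<forall>i\<in>{..<n}. (\<integral>p. \<psi> i p \<partial>G) \<in> ball (c G0 i) (\<epsilon> / (n + 1))}"
  show ?thesis
  proof
    show "openin (weak_conv_topology \<Gamma>) N"
      unfolding N_def using \<psi>_cont \<psi>(1)
      by (intro openin_weak_conv_topology_integrals)
         (auto intro: continuous_on_subset simp: bounded_iff intro!: exI[of _ 1])
    show "G0 \<in> N"
      using G0 \<open>\<epsilon> > 0\<close> by (simp add: N_def c_def Dk_def)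
    fix G assume "G \<in> N" and G: "G \<in> Dk \<Gamma> \<Gamma>0"
    have "(\<Sum>i<n. \<bar>c G i - c G0 i\<bar>) \<le> (\<Sum>i<n. \<epsilon> / (n + 1))"
      using \<open>G \<in> N\<close> by (intro sum_mono) (auto simp: N_def c_def dist_real_def abs_minus_commute less_imp_le)
    also have "\<dots> \<le> \<epsilon>"
      using \<open>\<epsilon> > 0\<close> by (simp add: field_simps)
    finally have weights_close: "(\<Sum>i<n. \<bar>c G i - c G0 i\<bar>) \<le> \<epsilon>" .
    have "(\<Sum>i<n. c G0 i) - (\<Sum>i<n. c G i) \<le> (\<Sum>i<n. \<bar>c G i - c G0 i\<bar>)"
      by (simp add: sum_subtractf[symmetric] sum_mono)
    moreover have "1 - \<epsilon> \<le> (\<Sum>i<n. c G0 i)"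
      using mass integral_sum_partition(1)[OF G0 \<psi>_measurable \<psi>] by (simp add: c_def)
    \<comment> \<open>the three error terms are at most 3\<epsilon>, \<epsilon> and 2\<epsilon>\<close>
    ultimately have "(1 - (\<Sum>i<n. c G i) + \<epsilon>) + (\<Sum>i<n. \<bar>c G i - c G0 i\<bar>) + (1 - (\<Sum>i<n. c G0 i) + \<epsilon>) \<le> e"
      using weights_close \<epsilon>_def by linarith
    then have "ennreal ((1 - (\<Sum>i<n. c G i) + \<epsilon>) + (\<Sum>i<n. \<bar>c G i - c G0 i\<bar>) + (1 - (\<Sum>i<n. c G0 i) + \<epsilon>)) \<le> e"
      by (rule ennreal_leI)
    with nn_integral_abs_mixtures_diff_le[OF G G0 \<psi>_measurable \<psi> q close less_imp_le[OF \<open>\<epsilon> > 0\<close>]]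
    show "(\<integral>\<^sup>+y. ennreal \<bar>mixture k G y - mixture k G0 y\<bar> \<partial>lborel_Y) \<le> e"
      unfolding c_def by (rule order_trans)
  qed
qed

lemma openin_mixture_preimage_hellinger_ball:
  assumes "f \<in> densities Y"
  shows "openin (subtopology (weak_conv_topology \<Gamma>) (Dk \<Gamma> \<Gamma>0))
           {G \<in> Dk \<Gamma> \<Gamma>0. hellinger Y f (mixture k G) < r}"
  unfolding openin_subopen[of _ "{G \<in> Dk \<Gamma> \<Gamma>0. hellinger Y f (mixture k G) < r}"]
proof
  fix G0 assume "G0 \<in> {G \<in> Dk \<Gamma> \<Gamma>0. hellinger Y f (mixture k G) < r}"
  then have G0: "G0 \<in> Dk \<Gamma> \<Gamma>0" and "hellinger Y f (mixture k G0) < r"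
    by auto
  obtain \<eta> :: real where "\<eta> > 0" and \<eta>: "\<And>g. g \<in> densities Y
      \<Longrightarrow> (\<integral>\<^sup>+y. ennreal \<bar>g y - mixture k G0 y\<bar> \<partial>lborel_Y) \<le> \<eta> \<Longrightarrow> hellinger Y f g < r"
    by (rule hellinger_ball_contains_L1_ball[OF Y_borel assms mixture_in_densities[OF G0]
          \<open>hellinger Y f (mixture k G0) < r\<close>]) (rule that)
  obtain N where "openin (weak_conv_topology \<Gamma>) N" "G0 \<in> N"
    and N: "\<And>G. G \<in> N \<Longrightarrow> G \<in> Dk \<Gamma> \<Gamma>0
             \<Longrightarrow> (\<integral>\<^sup>+y. ennreal \<bar>mixture k G y - mixture k G0 y\<bar> \<partial>lborel_Y) \<le> \<eta>"
    by (rule mixture_L1_neighbourhood[OF G0 \<open>\<eta> > 0\<close>]) (rule that)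
  show "\<exists>T. openin (subtopology (weak_conv_topology \<Gamma>) (Dk \<Gamma> \<Gamma>0)) T \<and> G0 \<in> T
            \<and> T \<subseteq> {G \<in> Dk \<Gamma> \<Gamma>0. hellinger Y f (mixture k G) < r}"
  proof (intro exI conjI)
    show "openin (subtopology (weak_conv_topology \<Gamma>) (Dk \<Gamma> \<Gamma>0)) (N \<inter> Dk \<Gamma> \<Gamma>0)"
      using \<open>openin (weak_conv_topology \<Gamma>) N\<close> by (auto simp: openin_subtopology)
    show "G0 \<in> N \<inter> Dk \<Gamma> \<Gamma>0"
      using \<open>G0 \<in> N\<close> G0 by simp
    show "N \<inter> Dk \<Gamma> \<Gamma>0 \<subseteq> {G \<in> Dk \<Gamma> \<Gamma>0. hellinger Y f (mixture k G) < r}"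
      using \<eta> N mixture_in_densities by blast
  qed
qed

lemma continuous_map_mixture:
  "continuous_map (subtopology (weak_conv_topology \<Gamma>) (Dk \<Gamma> \<Gamma>0)) (hellinger_topology Y) (mixture k)"
proof -
  let ?W = "subtopology (weak_conv_topology \<Gamma>) (Dk \<Gamma> \<Gamma>0)"
  let ?balls = "{{g \<in> densities Y. hellinger Y f g < r} | f r. f \<in> densities Y \<and> 0 < r}"
  have topspace: "topspace ?W = Dk \<Gamma> \<Gamma>0"
    by (auto simp: topspace_weak_conv_topology Dk_def)
  have preimage: "mixture k -` {g \<in> densities Y. hellinger Y f g < r} \<inter> Dk \<Gamma> \<Gamma>0
      = {G \<in> Dk \<Gamma> \<Gamma>0. hellinger Y f (mixture k G) < r}" for f r
    using mixture_in_densities by blast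
  have union: "\<Union>?balls = densities Y"
    using topspace_hellinger_topology[of Y] unfolding hellinger_topology_def topology_generated_by_topspace .
  show ?thesis
    unfolding hellinger_topology_def continuous_on_generated_topo_iff
  proof (intro conjI allI impI)
    fix U assume "U \<in> ?balls"
    then obtain f r where U: "U = {g \<in> densities Y. hellinger Y f g < r}" and "f \<in> densities Y"
      by blast
    show "openin ?W (mixture k -` U \<inter> topspace ?W)"
      unfolding U topspace preimage using \<open>f \<in> densities Y\<close> by (rule openin_mixture_preimage_hellinger_ball)
  next
    show "mixture k ` topspace ?W \<subseteq> \<Union>?balls"
      unfolding topspace union using mixture_in_densities by blast
  qed
qed

theorem measurable_mixture:
  "mixture k \<in> measurable (borel_of (subtopology (weak_conv_topology \<Gamma>) (Dk \<Gamma> \<Gamma>0)))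
                           (borel_of (hellinger_topology Y))"
  by (rule continuous_map_measurable_borel_of[OF continuous_map_mixture])

end

lemma borel_measurable_Gamma_real [measurable]:
  "f \<in> borel_measurable M \<Longrightarrow> (\<lambda>x. Gamma (f x) :: real) \<in> borel_measurable M"
proof (erule measurable_compose, rule borel_measurable_continuous_countable_exceptions)
  have "(\<int>\<^sub>\<le>\<^sub>0 :: real set) \<subseteq> range of_int"
    using nonpos_Ints_subset_Ints Ints_def by blast
  then show "countable (\<int>\<^sub>\<le>\<^sub>0 :: real set)"
    by (rule countable_subset) simp
  show "continuous_on (- \<int>\<^sub>\<le>\<^sub>0) (Gamma :: real \<Rightarrow> real)"
    by (rule continuous_on_Gamma) auto
qed

lemma continuous_on_Gamma_pos:
  fixes f :: "'a::topological_space \<Rightarrow> real"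
  assumes "continuous_on S f" and "\<And>x. x \<in> S \<Longrightarrow> f x > 0"
  shows "continuous_on S (\<lambda>x. Gamma (f x))"
  by (rule continuous_on_compose2[OF continuous_on_Gamma[of "{0<..}"] assms(1)])
     (use assms(2) in \<open>auto dest: nonpos_Ints_nonpos\<close>)

lemma Gamma_real_pos_neq_0: "(x::real) > 0 \<Longrightarrow> Gamma x \<noteq> 0"
  using Gamma_real_pos by (metis less_irrefl)

lemma gauss_kernel_eq:
  "gauss_kernel y p = (2 * pi * snd p) powr (-1/2) * exp (- ((y - fst p)^2) / (2 * snd p))"
  by (simp add: gauss_kernel_def case_prod_beta)

lemma gauss_kernel_eq_normal_density:
  assumes "\<phi> > 0"
  shows "gauss_kernel y (\<theta>, \<phi>) = normal_density \<theta> (sqrt \<phi>) y"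
proof -
  have "(2 * pi * \<phi>) powr (-1/2) = 1 / sqrt (2 * pi * \<phi>)"
    using assms by (simp add: powr_minus_divide powr_half_sqrt[symmetric] del: powr_half_sqrt)
  then show ?thesis
    using assms by (simp add: gauss_kernel_def normal_density_def)
qed

lemma mixture_kernel_gauss: "mixture_kernel gauss_kernel UNIV (param_space UNIV) (UNIV \<times> {0})"
proof -
  have nondegenerate: "param_space UNIV - UNIV \<times> {0} = UNIV \<times> {0<..}"
    by (auto simp: param_space_def)
  show ?thesis
  proof (unfold_locales, unfold nondegenerate)
    show "UNIV \<in> sets (borel :: real measure)" "UNIV \<times> {0::real} \<in> sets borel"
      by (auto intro: borel_closed closed_Times)
    show "UNIV \<times> {0} \<subseteq> param_space UNIV"
      by (auto simp: param_space_def)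
    show "open (UNIV \<times> {0::real<..})"
      by (intro open_Times) auto
    have "(\<lambda>x. gauss_kernel (fst x) (snd x)) \<in> borel_measurable (borel \<Otimes>\<^sub>M (borel \<Otimes>\<^sub>M borel))"
      unfolding gauss_kernel_eq by measurable
    then show "case_prod gauss_kernel \<in> borel_measurable borel"
      by (simp add: borel_prod case_prod_beta')
    show "(\<lambda>y. gauss_kernel y p) \<in> densities UNIV" if p: "p \<in> UNIV \<times> {0<..}" for p
      using p by (cases p) (auto intro!: densitiesI simp: gauss_kernel_eq_normal_density set_integrable_def
          set_lebesgue_integral_def integrable_normal_density integral_normal_density)
    show "continuous_on (UNIV \<times> {0<..}) (gauss_kernel y)" for y
      unfolding gauss_kernel_eq by (intro continuous_intros) auto
  qed
qed

lemma gamma_kernel_eq: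
  "gamma_kernel y p = (snd p / fst p) powr snd p / Gamma (snd p) * y powr (snd p - 1) * exp (- snd p * y / fst p)"
  by (simp add: gamma_kernel_def case_prod_beta)

lemma integral_Gamma_integrand:
  assumes "s > 0"
  shows "integrable lborel (\<lambda>t. indicator {0..} t * t powr (s - 1) / exp t :: real)"
    and "(\<integral>t. indicator {0..} t * t powr (s - 1) / exp t \<partial>lborel) = Gamma s"
proof -
  let ?h = "\<lambda>t. indicator {0..} t * t powr (s - 1) / exp t :: real"
  have nonneg: "AE t in lborel. 0 \<le> ?h t"
    by (simp add: indicator_def)
  have "(\<integral>\<^sup>+t. ennreal (?h t) \<partial>lborel) = ennreal (Gamma s)"
    using Gamma_conv_nn_integral_real[OF assms] by simp
  then show "integrable lborel ?h"
    by (intro integrableI_nonneg nonneg) auto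
  then show "(\<integral>t. ?h t \<partial>lborel) = Gamma s"
    using nn_integral_eq_integral[OF _ nonneg] \<open>(\<integral>\<^sup>+t. ennreal (?h t) \<partial>lborel) = ennreal (Gamma s)\<close>
      Gamma_real_pos[OF assms] by simp
qed

lemma set_integral_gamma_kernel:
  assumes "\<theta> > 0" and "\<phi> > 0"
  shows "set_integrable lborel {0..} (\<lambda>y. gamma_kernel y (\<theta>, \<phi>))"
    and "(\<integral>y\<in>{0..}. gamma_kernel y (\<theta>, \<phi>) \<partial>lborel) = 1"
proof -
  define l where "l = \<phi> / \<theta>"
  define h where "h t = indicator {0..} t * t powr (\<phi> - 1) / exp t" for t :: real
  have "l > 0"
    using assms by (simp add: l_def)
  have scaled: "indicator {0..} y *\<^sub>R gamma_kernel y (\<theta>, \<phi>) = (l / Gamma \<phi>) * h (0 + l * y)" for y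
  proof (cases "y \<ge> 0")
    case True
    have kernel: "gamma_kernel y (\<theta>, \<phi>) = l powr \<phi> / Gamma \<phi> * y powr (\<phi> - 1) * exp (- (l * y))"
      using assms by (simp add: gamma_kernel_def l_def field_simps)
    have integrand: "h (0 + l * y) = l powr (\<phi> - 1) * y powr (\<phi> - 1) / exp (l * y)"
      using True \<open>l > 0\<close> by (simp add: h_def indicator_def powr_mult)
    have "l powr \<phi> = l * l powr (\<phi> - 1)"
      using \<open>l > 0\<close> by (simp add: powr_mult_base)
    then show ?thesis
      using True unfolding kernel integrand by (simp add: exp_minus field_simps indicator_def)
  next
    case False
    then have "\<not> 0 \<le> l * y"
      using \<open>l > 0\<close> by (simp add: zero_le_mult_iff)
    then show ?thesis
      using False by (simp add: h_def indicator_def)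
  qed
  have "integrable lborel h" and integral_h: "(\<integral>t. h t \<partial>lborel) = Gamma \<phi>"
    unfolding h_def using integral_Gamma_integrand[OF \<open>\<phi> > 0\<close>] by simp_all
  then have "integrable lborel (\<lambda>y. h (0 + l * y))"
    using lborel_integrable_real_affine_iff[of l h 0] \<open>l > 0\<close> by simp
  then show "set_integrable lborel {0..} (\<lambda>y. gamma_kernel y (\<theta>, \<phi>))"
    unfolding set_integrable_def scaled by (rule integrable_mult_right)
  have "(\<integral>t. h t \<partial>lborel) = \<bar>l\<bar> *\<^sub>R (\<integral>y. h (0 + l * y) \<partial>lborel)"
    by (rule lborel_integral_real_affine) (use \<open>l > 0\<close> in simp)
  then have "(\<integral>y. h (0 + l * y) \<partial>lborel) = Gamma \<phi> / l"
    using \<open>l > 0\<close> integral_h by simp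
  then show "(\<integral>y\<in>{0..}. gamma_kernel y (\<theta>, \<phi>) \<partial>lborel) = 1"
    unfolding set_lebesgue_integral_def scaled using \<open>l > 0\<close> Gamma_real_pos[OF \<open>\<phi> > 0\<close>] by simp
qed

lemma gamma_kernel_density:
  assumes "\<theta> > 0" and "\<phi> > 0"
  shows "(\<lambda>y. gamma_kernel y (\<theta>, \<phi>)) \<in> densities {0..}"
proof (rule densitiesI)
  show "(\<lambda>y. gamma_kernel y (\<theta>, \<phi>)) \<in> borel_measurable borel"
    unfolding gamma_kernel_eq by measurable
  show "0 \<le> gamma_kernel y (\<theta>, \<phi>)" for y
    using assms by (simp add: gamma_kernel_eq less_imp_le[OF Gamma_real_pos])
qed (use set_integral_gamma_kernel[OF assms] in auto)

lemma continuous_on_gamma_kernel: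
  assumes "y \<ge> 0"
  shows "continuous_on ({0<..} \<times> {0<..}) (gamma_kernel y)"
proof (cases "y = 0")
  case True
  then show ?thesis
    by (simp add: gamma_kernel_eq)
next
  case False
  have "continuous_on ({0<..} \<times> {0<..}) (\<lambda>p::real \<times> real. Gamma (snd p))"
    by (intro continuous_on_Gamma_pos continuous_intros) auto
  then show ?thesis
    unfolding gamma_kernel_eq using False assms by (intro continuous_intros) (auto simp: Gamma_real_pos_neq_0)
qed

lemma mixture_kernel_gamma:
  "mixture_kernel gamma_kernel {0..} (param_space {0..}) ({0..} \<times> {0} \<union> {0} \<times> {0..})"
proof -
  have nondegenerate: "param_space {0..} - ({0..} \<times> {0} \<union> {0} \<times> {0..}) = {0<..} \<times> {0::real<..}"
    by (auto simp: param_space_def)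
  show ?thesis
  proof (unfold_locales, unfold nondegenerate)
    show "{0..} \<in> sets (borel :: real measure)"
      "({0..} \<times> {0} \<union> {0} \<times> {0..} :: (real \<times> real) set) \<in> sets borel"
      by (auto intro!: borel_closed closed_Un closed_Times)
    show "{0..} \<times> {0} \<union> {0} \<times> {0..} \<subseteq> param_space {0..}"
      by (auto simp: param_space_def)
    show "open ({0<..} \<times> {0<..} :: (real \<times> real) set)"
      by (intro open_Times) auto
    have "(\<lambda>x. gamma_kernel (fst x) (snd x)) \<in> borel_measurable (borel \<Otimes>\<^sub>M (borel \<Otimes>\<^sub>M borel))"
      unfolding gamma_kernel_eq by measurable
    then show "case_prod gamma_kernel \<in> borel_measurable borel"
      by (simp add: borel_prod case_prod_beta')
    show "(\<lambda>y. gamma_kernel y p) \<in> densities {0..}" if "p \<in> {0<..} \<times> {0<..}" for p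
      using that by (cases p) (auto intro: gamma_kernel_density)
    show "continuous_on ({0<..} \<times> {0<..}) (gamma_kernel y)" if "y \<in> {0..}" for y
      using that by (intro continuous_on_gamma_kernel) simp
  qed
qed

lemma beta_kernel_eq:
  "beta_kernel y p = Gamma (snd p) / (Gamma (fst p * snd p) * Gamma ((1 - fst p) * snd p))
     * y powr (fst p * snd p - 1) * (1 - y) powr ((1 - fst p) * snd p - 1)"
  by (simp add: beta_kernel_def case_prod_beta)

lemma set_integral_beta_kernel:
  assumes "0 < \<theta>" "\<theta> < 1" and "\<phi> > 0"
  shows "set_integrable lborel {0..1} (\<lambda>y. beta_kernel y (\<theta>, \<phi>))"
    and "(\<integral>y\<in>{0..1}. beta_kernel y (\<theta>, \<phi>) \<partial>lborel) = 1"
proof -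
  define a where "a = \<theta> * \<phi>"
  define b where "b = (1 - \<theta>) * \<phi>"
  define C where "C = Gamma \<phi> / (Gamma a * Gamma b)"
  have "a > 0" and "b > 0" and "a + b = \<phi>"
    using assms by (simp_all add: a_def b_def algebra_simps)
  have scaled: "(\<lambda>y. indicat_real {0..1} y *\<^sub>R beta_kernel y (\<theta>, \<phi>))
      = (\<lambda>y. C * (indicat_real {0..1} y *\<^sub>R (y powr (a - 1) * (1 - y) powr (b - 1))))"
    by (simp add: beta_kernel_def C_def a_def b_def fun_eq_iff)
  have beta: "set_integrable lborel {0..1} (\<lambda>t. t powr (a - 1) * (1 - t) powr (b - 1))"
    by (rule integrable_Beta[OF \<open>a > 0\<close> \<open>b > 0\<close>])
  then show "set_integrable lborel {0..1} (\<lambda>y. beta_kernel y (\<theta>, \<phi>))"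
    unfolding set_integrable_def scaled by (rule integrable_mult_right)
  have "(\<integral>y\<in>{0..1}. (y powr (a - 1) * (1 - y) powr (b - 1)) \<partial>lborel) = Beta a b"
    using set_borel_integral_eq_integral(2)[OF beta] has_integral_Beta_real[OF \<open>a > 0\<close> \<open>b > 0\<close>]
    by (simp add: integral_unique)
  then show "(\<integral>y\<in>{0..1}. beta_kernel y (\<theta>, \<phi>) \<partial>lborel) = 1"
    unfolding set_lebesgue_integral_def scaled
    using Gamma_real_pos[OF \<open>a > 0\<close>] Gamma_real_pos[OF \<open>b > 0\<close>] Gamma_real_pos[OF \<open>\<phi> > 0\<close>] \<open>a + b = \<phi>\<close>
    by (simp add: C_def Beta_def)
qed

lemma beta_kernel_density:
  assumes "0 < \<theta>" "\<theta> < 1" and "\<phi> > 0"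
  shows "(\<lambda>y. beta_kernel y (\<theta>, \<phi>)) \<in> densities {0..1}"
proof (rule densitiesI)
  show "(\<lambda>y. beta_kernel y (\<theta>, \<phi>)) \<in> borel_measurable borel"
    unfolding beta_kernel_eq by measurable
  show "0 \<le> beta_kernel y (\<theta>, \<phi>)" if "y \<in> {0..1}" for y
    using assms that
    by (auto simp: beta_kernel_eq intro!: mult_nonneg_nonneg divide_nonneg_nonneg less_imp_le[OF Gamma_real_pos])
qed (use set_integral_beta_kernel[OF assms] in auto)

lemma continuous_on_beta_kernel:
  assumes "y \<in> {0..1}"
  shows "continuous_on ({0<..<1} \<times> {0<..}) (beta_kernel y)"
proof (cases "y = 0 \<or> y = 1")
  case True
  then show ?thesis
    by (auto simp: beta_kernel_eq)
next
  case False
  have "continuous_on ({0<..<1} \<times> {0<..}) (\<lambda>p::real \<times> real. Gamma (snd p))"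
    "continuous_on ({0<..<1} \<times> {0<..}) (\<lambda>p::real \<times> real. Gamma (fst p * snd p))"
    "continuous_on ({0<..<1} \<times> {0<..}) (\<lambda>p::real \<times> real. Gamma ((1 - fst p) * snd p))"
    by (intro continuous_on_Gamma_pos continuous_intros; force)+
  then show ?thesis
    unfolding beta_kernel_eq using False assms
    by (intro continuous_intros) (auto simp: Gamma_real_pos_neq_0 zero_less_mult_iff)
qed

lemma mixture_kernel_beta:
  "mixture_kernel beta_kernel {0..1} (param_space {0..1}) ({0..1} \<times> {0} \<union> {0, 1} \<times> {0..})"
proof -
  have nondegenerate: "param_space {0..1} - ({0..1} \<times> {0} \<union> {0, 1} \<times> {0..}) = {0<..<1} \<times> {0::real<..}"
    by (auto simp: param_space_def)
  show ?thesis
  proof (unfold_locales, unfold nondegenerate)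
    show "{0..1} \<in> sets (borel :: real measure)"
      "({0..1} \<times> {0} \<union> {0, 1} \<times> {0..} :: (real \<times> real) set) \<in> sets borel"
      by (auto intro!: borel_closed closed_Un closed_Times closed_insert)
    show "{0..1} \<times> {0} \<union> {0, 1} \<times> {0..} \<subseteq> param_space {0..1}"
      by (auto simp: param_space_def)
    show "open ({0<..<1} \<times> {0<..} :: (real \<times> real) set)"
      by (intro open_Times) auto
    have "(\<lambda>x. beta_kernel (fst x) (snd x)) \<in> borel_measurable (borel \<Otimes>\<^sub>M (borel \<Otimes>\<^sub>M borel))"
      unfolding beta_kernel_eq by measurable
    then show "case_prod beta_kernel \<in> borel_measurable borel"
      by (simp add: borel_prod case_prod_beta')
    show "(\<lambda>y. beta_kernel y p) \<in> densities {0..1}" if "p \<in> {0<..<1} \<times> {0<..}" for p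
      using that by (cases p) (auto intro: beta_kernel_density)
    show "continuous_on ({0<..<1} \<times> {0<..}) (beta_kernel y)" if "y \<in> {0..1}" for y
      using that by (rule continuous_on_beta_kernel)
  qed
qed

theorem theorem8:
  shows "mixture gauss_kernel \<in> measurable
           (borel_of (subtopology (weak_conv_topology (param_space UNIV))
                        (Dk (param_space UNIV) (UNIV \<times> {0}))))
           (borel_of (hellinger_topology UNIV))
       \<and> mixture gamma_kernel \<in> measurable
           (borel_of (subtopology (weak_conv_topology (param_space {0..}))
                        (Dk (param_space {0..}) ({0..} \<times> {0} \<union> {0} \<times> {0..}))))
           (borel_of (hellinger_topology {0..}))
       \<and> mixture beta_kernel \<in> measurable
           (borel_of (subtopology (weak_conv_topology (param_space {0..1}))
                        (Dk (param_space {0..1}) ({0..1} \<times> {0} \<union> {0, 1} \<times> {0..}))))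
           (borel_of (hellinger_topology {0..1}))"
  using mixture_kernel.measurable_mixture[OF mixture_kernel_gauss]
    mixture_kernel.measurable_mixture[OF mixture_kernel_gamma]
    mixture_kernel.measurable_mixture[OF mixture_kernel_beta]
  by blast

end
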